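(* Let $P$ be a finite ranked poset with unique minimal element and with the non-nesting property, such that $|S(p)|>1$ whenever $p$ has rank greater than $1$. If $Q$ is a finite ranked poset with unique minimal element such that $Q\sim_BP$, then $P_{\ge2}\cong Q_{\ge2}$ as (ranked) posets.
   Context: A ranked poset has a rank function with $|x|=|y|+1$ whenever $x$ covers $y$ and $|x|=0$ iff $x$ is minimal. Its Hasse diagram is the layered graph with layers $P_i=\{p:|p|=i\}$ and an edge $(p,q)$ for each covering relation $p\gtrdot q$; $S(p)$ is the set of elements covered by $p$, and $P_{\ge j}=\bigcup_{i\ge j}P_i$ with the induced order. For a layered graph with vertex set $V=\bigsqcup V_i$, $V_+=\bigsqcup_{i\ge1}V_i$, $B(\Gamma)=T(V_+)/R_B$ over a field $\mathbb F$, where $R_B$ is the two-sided ideal generated by $\{vw: v,w\in V_+,(v,w)\notin E\}\cup\{v\sum_{w\in S(v)}w: v\in V_{\ge2}\}$; it is doubly graded with $v_1\cdots v_m$ in bidegree $(m,\sum|v_i|)$. $B(P)$ means $B$ of the Hasse diagram, and $Q\sim_BP$ means there is a doubly graded algebra isomorphism $B(P)\to B(Q)$. $P$ has the non-nesting property if for any two distinct elements $p,q$ each covering more than one element, $S(p)\not\subseteq S(q)$. *)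

theory Defs
  imports Main
begin

definition is_poset :: "'a set \<Rightarrow> ('a \<Rightarrow> 'a \<Rightarrow> bool) \<Rightarrow> bool" where
  "is_poset P le \<longleftrightarrow>
     (\<forall>x\<in>P. le x x) \<and>
     (\<forall>x\<in>P. \<forall>y\<in>P. le x y \<and> le y x \<longrightarrow> x = y) \<and>
     (\<forall>x\<in>P. \<forall>y\<in>P. \<forall>z\<in>P. le x y \<and> le y z \<longrightarrow> le x z)"

definition covers :: "'a set \<Rightarrow> ('a \<Rightarrow> 'a \<Rightarrow> bool) \<Rightarrow> 'a \<Rightarrow> 'a \<Rightarrow> bool" where
  "covers P le p q \<longleftrightarrow> p \<in> P \<and> q \<in> P \<and> le q p \<and> q \<noteq> p \<and>
     \<not> (\<exists>r\<in>P. le q r \<and> le r p \<and> r \<noteq> q \<and> r \<noteq> p)"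

definition minimal_elem :: "'a set \<Rightarrow> ('a \<Rightarrow> 'a \<Rightarrow> bool) \<Rightarrow> 'a \<Rightarrow> bool" where
  "minimal_elem P le x \<longleftrightarrow> x \<in> P \<and> (\<forall>y\<in>P. le y x \<longrightarrow> y = x)"

definition rank_function :: "'a set \<Rightarrow> ('a \<Rightarrow> 'a \<Rightarrow> bool) \<Rightarrow> ('a \<Rightarrow> nat) \<Rightarrow> bool" where
  "rank_function P le rk \<longleftrightarrow>
     (\<forall>p q. covers P le p q \<longrightarrow> rk p = rk q + 1) \<and>
     (\<forall>x\<in>P. rk x = 0 \<longleftrightarrow> minimal_elem P le x)"

definition fin_ranked_poset_umin :: "'a set \<Rightarrow> ('a \<Rightarrow> 'a \<Rightarrow> bool) \<Rightarrow> ('a \<Rightarrow> nat) \<Rightarrow> bool" where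
  "fin_ranked_poset_umin P le rk \<longleftrightarrow> finite P \<and> is_poset P le \<and> rank_function P le rk \<and>
     (\<exists>!x. minimal_elem P le x)"

definition S_cov :: "'a set \<Rightarrow> ('a \<Rightarrow> 'a \<Rightarrow> bool) \<Rightarrow> 'a \<Rightarrow> 'a set" where
  "S_cov P le p = {q. covers P le p q}"

definition non_nesting :: "'a set \<Rightarrow> ('a \<Rightarrow> 'a \<Rightarrow> bool) \<Rightarrow> bool" where
  "non_nesting P le \<longleftrightarrow>
     (\<forall>p\<in>P. \<forall>q\<in>P. p \<noteq> q \<and> card (S_cov P le p) > 1 \<and> card (S_cov P le q) > 1
        \<longrightarrow> \<not> S_cov P le p \<subseteq> S_cov P le q)"

text \<open>Elements of the tensor algebra T(V_+) over the field 'k are finitely supported functions from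
  words (lists) over V_+ to 'k.\<close>

definition Vplus :: "'v set \<Rightarrow> ('v \<Rightarrow> nat) \<Rightarrow> 'v set" where
  "Vplus V rk = {v\<in>V. rk v \<ge> 1}"

definition tens :: "'v set \<Rightarrow> ('v list \<Rightarrow> 'k::field) set" where
  "tens W = {x. finite {w. x w \<noteq> 0} \<and> (\<forall>w. x w \<noteq> 0 \<longrightarrow> set w \<subseteq> W)}"

definition tmult :: "('v list \<Rightarrow> 'k::field) \<Rightarrow> ('v list \<Rightarrow> 'k) \<Rightarrow> ('v list \<Rightarrow> 'k)" where
  "tmult x y = (\<lambda>w. \<Sum>i\<in>{0..length w}. x (take i w) * y (drop i w))"

definition tmono :: "'v list \<Rightarrow> ('v list \<Rightarrow> 'k::field)" where
  "tmono u = (\<lambda>w. if w = u then 1 else 0)"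

definition tadd :: "('v list \<Rightarrow> 'k::field) \<Rightarrow> ('v list \<Rightarrow> 'k) \<Rightarrow> ('v list \<Rightarrow> 'k)" where
  "tadd x y = (\<lambda>w. x w + y w)"

definition tsub :: "('v list \<Rightarrow> 'k::field) \<Rightarrow> ('v list \<Rightarrow> 'k) \<Rightarrow> ('v list \<Rightarrow> 'k)" where
  "tsub x y = (\<lambda>w. x w - y w)"

definition tscale :: "'k::field \<Rightarrow> ('v list \<Rightarrow> 'k) \<Rightarrow> ('v list \<Rightarrow> 'k)" where
  "tscale c x = (\<lambda>w. c * x w)"

inductive_set tideal :: "'v set \<Rightarrow> ('v list \<Rightarrow> 'k::field) set \<Rightarrow> ('v list \<Rightarrow> 'k) set"
  for W G where
  zero: "(\<lambda>_. 0) \<in> tideal W G"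
| gen: "g \<in> G \<Longrightarrow> a \<in> tens W \<Longrightarrow> b \<in> tens W \<Longrightarrow> tmult (tmult a g) b \<in> tideal W G"
| add: "x \<in> tideal W G \<Longrightarrow> y \<in> tideal W G \<Longrightarrow> tadd x y \<in> tideal W G"

definition RB_gens :: "'v set \<Rightarrow> ('v \<Rightarrow> nat) \<Rightarrow> ('v \<times> 'v) set \<Rightarrow> ('v list \<Rightarrow> 'k::field) set" where
  "RB_gens V rk E =
     {tmono [v, w] | v w. v \<in> Vplus V rk \<and> w \<in> Vplus V rk \<and> (v, w) \<notin> E} \<union>
     {(\<lambda>u. \<Sum>w\<in>{w. (v, w) \<in> E}. tmono [v, w] u) | v. v \<in> V \<and> rk v \<ge> 2}"

definition RB :: "'v set \<Rightarrow> ('v \<Rightarrow> nat) \<Rightarrow> ('v \<times> 'v) set \<Rightarrow> ('v list \<Rightarrow> 'k::field) set" where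
  "RB V rk E = tideal (Vplus V rk) (RB_gens V rk E)"

definition homog :: "('v \<Rightarrow> nat) \<Rightarrow> nat \<Rightarrow> nat \<Rightarrow> ('v list \<Rightarrow> 'k::field) \<Rightarrow> bool" where
  "homog rk m n x \<longleftrightarrow> (\<forall>w. x w \<noteq> 0 \<longrightarrow> length w = m \<and> sum_list (map rk w) = n)"

text \<open>phi, acting on representatives in T(V_+), induces a doubly graded (unital) algebra
  isomorphism B(Gamma1) = T(V1_+)/R_B(Gamma1) \<rightarrow> B(Gamma2) = T(V2_+)/R_B(Gamma2).\<close>
definition graded_B_iso ::
  "'v set \<Rightarrow> ('v \<Rightarrow> nat) \<Rightarrow> ('v \<times> 'v) set \<Rightarrow>
   'u set \<Rightarrow> ('u \<Rightarrow> nat) \<Rightarrow> ('u \<times> 'u) set \<Rightarrow>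
   (('v list \<Rightarrow> 'k::field) \<Rightarrow> ('u list \<Rightarrow> 'k)) \<Rightarrow> bool" where
  "graded_B_iso V1 rk1 E1 V2 rk2 E2 phi \<longleftrightarrow>
    (let T1 = tens (Vplus V1 rk1); T2 = tens (Vplus V2 rk2);
         I1 = RB V1 rk1 E1; I2 = RB V2 rk2 E2 in
     (\<forall>x\<in>T1. phi x \<in> T2) \<and>
     (\<forall>x\<in>T1. \<forall>y\<in>T1. tsub x y \<in> I1 \<longrightarrow> tsub (phi x) (phi y) \<in> I2) \<and>
     (\<forall>x\<in>T1. \<forall>y\<in>T1. tsub (phi x) (phi y) \<in> I2 \<longrightarrow> tsub x y \<in> I1) \<and>
     (\<forall>z\<in>T2. \<exists>x\<in>T1. tsub (phi x) z \<in> I2) \<and>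
     (\<forall>c. \<forall>x\<in>T1. \<forall>y\<in>T1.
        tsub (phi (tadd (tscale c x) y)) (tadd (tscale c (phi x)) (phi y)) \<in> I2) \<and>
     (\<forall>x\<in>T1. \<forall>y\<in>T1. tsub (phi (tmult x y)) (tmult (phi x) (phi y)) \<in> I2) \<and>
     tsub (phi (tmono [])) (tmono []) \<in> I2 \<and>
     (\<forall>x\<in>T1. \<forall>m n. homog rk1 m n x \<longrightarrow>
        (\<exists>y\<in>T2. homog rk2 m n y \<and> tsub (phi x) y \<in> I2)))"

definition hasse_edges :: "'a set \<Rightarrow> ('a \<Rightarrow> 'a \<Rightarrow> bool) \<Rightarrow> ('a \<times> 'a) set" where
  "hasse_edges P le = {(p, q). covers P le p q}"

definition B_equiv ::
  "'k::field itself \<Rightarrow> 'b set \<Rightarrow> ('b \<Rightarrow> 'b \<Rightarrow> bool) \<Rightarrow> ('b \<Rightarrow> nat) \<Rightarrow>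
   'a set \<Rightarrow> ('a \<Rightarrow> 'a \<Rightarrow> bool) \<Rightarrow> ('a \<Rightarrow> nat) \<Rightarrow> bool" where
  "B_equiv _ Q leQ rkQ P leP rkP \<longleftrightarrow>
     (\<exists>phi :: ('a list \<Rightarrow> 'k) \<Rightarrow> ('b list \<Rightarrow> 'k).
        graded_B_iso P rkP (hasse_edges P leP) Q rkQ (hasse_edges Q leQ) phi)"

end

theory Submission
  imports Defs
begin

text \<open>The component of \<open>B(P)\<close> of bidegree \<open>(1, i)\<close> is the vector space with basis \<open>P\<^sub>i\<close>,
  so a doubly graded isomorphism \<open>B(P) \<rightarrow> B(Q)\<close> restricts to linear isomorphisms
  \<open>phi1 i\<close> from \<open>span P\<^sub>i\<close> to \<open>span Q\<^sub>i\<close>. For \<open>f\<close> of rank \<open>i\<close> and \<open>h\<close> of rank \<open>i - 1\<close> the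
  product \<open>f h\<close> vanishes in \<open>B\<close> iff \<open>h\<close> is constant on \<open>S(u)\<close> for every \<open>u\<close> in the support
  of \<open>f\<close>; hence the annihilators of degree-one elements are read off the Hasse diagram, and
  they are respected by \<open>phi1\<close>. If all the sets \<open>S(u)\<close> with \<open>|u| = i\<close> have at least two
  elements and none contains another, the nonzero elements with maximal annihilator are
  exactly the multiples of basis vectors. So \<open>phi1 i\<close> maps each \<open>u \<in> P\<^sub>i\<close> to a multiple of some
  \<open>q \<in> Q\<^sub>i\<close>, and \<open>u \<mapsto> q\<close> is a bijection. Whether a basis vector of rank \<open>i - 1\<close> annihilates one
  of rank \<open>i\<close> detects the covering relation, so this bijection is an isomorphism of the
  Hasse diagrams above rank 1, hence of the posets \<open>P_{\<ge>2}\<close> and \<open>Q_{\<ge>2}\<close>.\<close>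

section \<open>The tensor algebra and its two-sided ideals\<close>

lemma tmult_Nil: "tmult x y [] = x [] * y []"
  by (simp add: tmult_def)

lemma tmult_Cons: "tmult x y (a # w) = x [] * y (a # w) + tmult (\<lambda>v. x (a # v)) y w"
  unfolding tmult_def
  by (simp only: list.size add_Suc_right add_0_right sum.atLeast0_atMost_Suc_shift) simp

lemma tmult_linear_left: "tmult (\<lambda>v. c * f v + g v) z w = c * tmult f z w + tmult g z w"
  unfolding tmult_def by (simp add: algebra_simps sum.distrib sum_distrib_left)

lemma tmult_assoc: "tmult (tmult x y) z = tmult x (tmult y z)"
proof
  fix w show "tmult (tmult x y) z w = tmult x (tmult y z) w"
  proof (induction w arbitrary: x)
    case Nil
    then show ?case by (simp add: tmult_Nil)
  next
    case (Cons a w)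
    have "(\<lambda>v. tmult x y (a # v)) = (\<lambda>v. x [] * y (a # v) + tmult (\<lambda>v. x (a # v)) y v)"
      by (simp add: tmult_Cons)
    then show ?case
      using Cons.IH by (simp add: tmult_Cons tmult_linear_left tmult_Nil algebra_simps)
  qed
qed

lemma tmult_tadd_left: "tmult (tadd x y) z = tadd (tmult x z) (tmult y z)"
  unfolding tmult_def tadd_def by (auto simp: algebra_simps sum.distrib)

lemma tmult_tadd_right: "tmult z (tadd x y) = tadd (tmult z x) (tmult z y)"
  unfolding tmult_def tadd_def by (auto simp: algebra_simps sum.distrib)

lemma tmult_tsub_left: "tmult (tsub x y) z = tsub (tmult x z) (tmult y z)"
  unfolding tmult_def tsub_def by (auto simp: algebra_simps sum_subtractf)

lemma tmult_tsub_right: "tmult z (tsub x y) = tsub (tmult z x) (tmult z y)"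
  unfolding tmult_def tsub_def by (auto simp: algebra_simps sum_subtractf)

lemma tmult_tscale_left: "tmult (tscale c x) y = tscale c (tmult x y)"
  unfolding tmult_def tscale_def by (auto simp: algebra_simps sum_distrib_left)

lemma tmult_zero_left: "tmult (\<lambda>_. 0) y = (\<lambda>_. 0)"
  unfolding tmult_def by auto

lemma tmult_zero_right: "tmult y (\<lambda>_. 0) = (\<lambda>_. 0)"
  unfolding tmult_def by auto

lemma tmult_one_left: "tmult (tmono []) x = x"
proof
  fix w show "tmult (tmono []) x w = x w"
    by (cases w) (simp_all add: tmult_Nil tmult_Cons tmono_def tmult_zero_left)
qed

lemma tmult_one_right: "tmult x (tmono []) = x"
proof
  fix w show "tmult x (tmono []) w = x w"
    by (induction w arbitrary: x) (simp_all add: tmult_Nil tmult_Cons tmono_def)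
qed

lemma tmult_nonzeroE:
  assumes "tmult x y w \<noteq> 0"
  obtains i where "x (take i w) \<noteq> 0" "y (drop i w) \<noteq> 0"
proof -
  have "\<not> (\<forall>i. x (take i w) * y (drop i w) = 0)"
    using assms unfolding tmult_def by (metis (no_types, lifting) sum.neutral)
  then show ?thesis using that by auto
qed

lemma tens_tmult:
  assumes x: "x \<in> tens W" and y: "y \<in> tens W"
  shows "tmult x y \<in> tens W"
proof -
  let ?Sx = "{w. x w \<noteq> 0}" and ?Sy = "{w. y w \<noteq> 0}"
  have "{w. tmult x y w \<noteq> 0} \<subseteq> (\<lambda>(u, v). u @ v) ` (?Sx \<times> ?Sy)"
  proof
    fix w assume "w \<in> {w. tmult x y w \<noteq> 0}"
    then obtain i where "x (take i w) \<noteq> 0" "y (drop i w) \<noteq> 0"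
      by (auto elim: tmult_nonzeroE)
    then show "w \<in> (\<lambda>(u, v). u @ v) ` (?Sx \<times> ?Sy)"
      by (auto intro!: image_eqI[where x = "(take i w, drop i w)"])
  qed
  moreover have "finite (?Sx \<times> ?Sy)" using x y by (simp add: tens_def)
  moreover have "set w \<subseteq> W" if nz: "tmult x y w \<noteq> 0" for w
  proof -
    obtain i where "x (take i w) \<noteq> 0" "y (drop i w) \<noteq> 0"
      using nz by (rule tmult_nonzeroE)
    then have "set (take i w) \<subseteq> W" "set (drop i w) \<subseteq> W" using x y by (auto simp: tens_def)
    then show ?thesis by (metis append_take_drop_id set_append Un_subset_iff)
  qed
  ultimately show ?thesis by (auto simp: tens_def intro: finite_subset)
qed

lemma tens_tadd:
  assumes "x \<in> tens W" "y \<in> tens W"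
  shows "tadd x y \<in> tens W"
proof -
  have "{w. tadd x y w \<noteq> 0} \<subseteq> {w. x w \<noteq> 0} \<union> {w. y w \<noteq> 0}" by (auto simp: tadd_def)
  then show ?thesis using assms unfolding tens_def by (auto simp: tadd_def intro: finite_subset)
qed

lemma tens_tscale: "x \<in> tens W \<Longrightarrow> tscale c x \<in> tens W"
  unfolding tens_def tscale_def by (auto intro: finite_subset[of _ "{w. x w \<noteq> 0}"])

lemma tsub_eq_tadd_tscale: "tsub x y = tadd x (tscale (-1) y)"
  by (auto simp: tsub_def tadd_def tscale_def)

lemma tens_tsub: "x \<in> tens W \<Longrightarrow> y \<in> tens W \<Longrightarrow> tsub x y \<in> tens W"
  by (simp add: tsub_eq_tadd_tscale tens_tadd tens_tscale)

lemma tens_zero: "(\<lambda>_. 0) \<in> tens W"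
  by (simp add: tens_def)

lemma tens_tmono: "set u \<subseteq> W \<Longrightarrow> tmono u \<in> tens W"
  by (simp add: tens_def tmono_def)

lemma tideal_tscale: "x \<in> tideal W G \<Longrightarrow> tscale c x \<in> tideal W G"
proof (induction rule: tideal.induct)
  case zero
  then show ?case by (simp add: tscale_def tideal.zero)
next
  case (gen g a b)
  then show ?case
    by (metis tmult_tscale_left tens_tscale tideal.gen)
next
  case (add x y)
  have "tscale c (tadd x y) = tadd (tscale c x) (tscale c y)"
    by (auto simp: tscale_def tadd_def algebra_simps)
  then show ?case using add tideal.add by metis
qed

lemma tideal_tsub: "x \<in> tideal W G \<Longrightarrow> y \<in> tideal W G \<Longrightarrow> tsub x y \<in> tideal W G"
  by (simp add: tsub_eq_tadd_tscale tideal.add tideal_tscale)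

lemma tideal_generator: "g \<in> G \<Longrightarrow> g \<in> tideal W G"
  using tideal.gen[of g G "tmono []" W "tmono []"] tens_tmono[of "[]" W]
  by (simp add: tmult_one_left tmult_one_right)

lemma tideal_tmult_right: "x \<in> tideal W G \<Longrightarrow> c \<in> tens W \<Longrightarrow> tmult x c \<in> tideal W G"
proof (induction rule: tideal.induct)
  case zero
  then show ?case by (simp add: tmult_zero_left tideal.zero)
next
  case (gen g a b)
  then show ?case by (metis tmult_assoc tens_tmult tideal.gen)
next
  case (add x y)
  then show ?case by (simp add: tmult_tadd_left tideal.add)
qed

lemma tideal_tmult_left: "x \<in> tideal W G \<Longrightarrow> c \<in> tens W \<Longrightarrow> tmult c x \<in> tideal W G"
proof (induction rule: tideal.induct)
  case zero
  then show ?case by (simp add: tmult_zero_right tideal.zero)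
next
  case (gen g a b)
  then show ?case by (metis tmult_assoc tens_tmult tideal.gen)
next
  case (add x y)
  then show ?case by (simp add: tmult_tadd_right tideal.add)
qed

lemma tsub_tideal_sym:
  assumes "tsub a b \<in> tideal W G"
  shows "tsub b a \<in> tideal W G"
proof -
  have "tsub b a = tscale (-1) (tsub a b)" by (auto simp: tsub_def tscale_def)
  with assms show ?thesis by (simp add: tideal_tscale)
qed

lemma tsub_tideal_trans:
  assumes "tsub a b \<in> tideal W G" "tsub b c \<in> tideal W G"
  shows "tsub a c \<in> tideal W G"
proof -
  have "tadd (tsub a b) (tsub b c) = tsub a c" by (auto simp: tsub_def tadd_def)
  with assms show ?thesis by (metis tideal.add)
qed

lemma tsub_tideal_linear:
  assumes "tsub a b \<in> tideal W G" "tsub c d \<in> tideal W G"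
  shows "tsub (tadd (tscale k a) c) (tadd (tscale k b) d) \<in> tideal W G"
proof -
  have "tsub (tadd (tscale k a) c) (tadd (tscale k b) d) = tadd (tscale k (tsub a b)) (tsub c d)"
    by (auto simp: tsub_def tscale_def tadd_def algebra_simps)
  with assms show ?thesis by (metis tideal_tscale tideal.add)
qed

lemma tsub_tideal_tmult:
  assumes "tsub a a' \<in> tideal W G" "tsub b b' \<in> tideal W G" "b \<in> tens W" "a' \<in> tens W"
  shows "tsub (tmult a b) (tmult a' b') \<in> tideal W G"
proof -
  have "tsub (tmult a b) (tmult a' b') = tadd (tmult (tsub a a') b) (tmult a' (tsub b b'))"
    by (simp only: tmult_tsub_left tmult_tsub_right) (auto simp: tsub_def tadd_def)
  then show ?thesis
    using assms by (simp add: tideal_tmult_left tideal_tmult_right tideal.add)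
qed

lemma tideal_iff_tsub_tideal:
  assumes "tsub a b \<in> tideal W G"
  shows "a \<in> tideal W G \<longleftrightarrow> b \<in> tideal W G"
proof -
  have "tsub a (tsub a b) = b" "tadd (tsub a b) b = a" by (auto simp: tsub_def tadd_def)
  with assms show ?thesis by (metis tideal_tsub tideal.add)
qed

lemma tens_induct [consumes 1, case_names zero monomial]:
  assumes "x \<in> tens W"
    and zero: "P (\<lambda>_. 0)"
    and monomial: "\<And>c w x. set w \<subseteq> W \<Longrightarrow> x \<in> tens W \<Longrightarrow> P x \<Longrightarrow> P (tadd (tscale c (tmono w)) x)"
  shows "P x"
  using assms(1)
proof (induction "card {w. x w \<noteq> 0}" arbitrary: x rule: less_induct)
  case less
  show ?case
  proof (cases "\<exists>w0. x w0 \<noteq> 0")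
    case False
    then have "x = (\<lambda>_. 0)" by auto
    then show ?thesis using zero by simp
  next
    case True
    then obtain w0 where w0: "x w0 \<noteq> 0" by blast
    have set_w0: "set w0 \<subseteq> W" using less.prems w0 by (auto simp: tens_def)
    define x' where "x' = tsub x (tscale (x w0) (tmono w0))"
    have x': "x' \<in> tens W"
      unfolding x'_def using less.prems tens_tsub tens_tscale tens_tmono[OF set_w0] by blast
    have "{w. x' w \<noteq> 0} \<subset> {w. x w \<noteq> 0}"
      using w0 by (auto simp: x'_def tsub_def tscale_def tmono_def split: if_splits)
    then have "P x'"
      using less.hyps x' less.prems by (auto simp: tens_def intro: psubset_card_mono)
    moreover have "x = tadd (tscale (x w0) (tmono w0)) x'"
      by (auto simp: x'_def tsub_def tadd_def tscale_def)
    ultimately show ?thesis using monomial set_w0 x' by metis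
  qed
qed

section \<open>Degree-one elements and the generators of \<open>R_B\<close>\<close>

definition tvec :: "('v \<Rightarrow> 'k::field) \<Rightarrow> 'v list \<Rightarrow> 'k" where
  "tvec f w = (if length w = 1 then f (hd w) else 0)"

lemma tvec_simps [simp]: "tvec f [] = 0" "tvec f [a] = f a" "tvec f (a # b # w) = 0"
  by (auto simp: tvec_def)

lemma tvec_nonzeroE:
  assumes "tvec f w \<noteq> 0"
  obtains u where "w = [u]" "f u \<noteq> 0"
  using assms by (cases w rule: list.exhaust[case_product list.exhaust[of "tl w"]]) auto

lemma tvec_linear: "tvec (\<lambda>u. c * f u + g u) = tadd (tscale c (tvec f)) (tvec g)"
  by (auto simp: tvec_def tadd_def tscale_def)

lemma tvec_zero: "tvec (\<lambda>_. 0) = (\<lambda>_. 0)"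
  by (auto simp: tvec_def)

lemma length2_conv: "length w = 2 \<longleftrightarrow> (\<exists>a b. w = [a, b])"
  by (cases w rule: list.exhaust[case_product list.exhaust[of "tl w"]]) auto

lemma tmult_tvec: "tmult (tvec f) (tvec g) w = (if length w = 2 then f (w ! 0) * g (w ! 1) else 0)"
proof (cases "length w = 2")
  case True
  then obtain a b where "w = [a, b]" by (auto simp: length2_conv)
  then show ?thesis by (simp add: tmult_Cons tmult_Nil)
next
  case False
  have "tvec f (take i w) * tvec g (drop i w) = 0" for i
  proof (rule ccontr)
    assume "\<not> ?thesis"
    then have "length (take i w) = 1" "length (drop i w) = 1"
      by (auto simp: tvec_def split: if_splits)
    then have "length w = 2" by (metis length_append append_take_drop_id one_add_one)
    with False show False by simp
  qed
  then show ?thesis using False unfolding tmult_def by (auto intro: sum.neutral)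
qed

lemma tmult_vanishing_short:
  assumes "\<And>w. length w < 2 \<Longrightarrow> g w = 0"
  shows "length w < 2 \<Longrightarrow> tmult (tmult a g) b w = 0"
    and "tmult (tmult a g) b [u, v] = a [] * g [u, v] * b []"
proof -
  have g: "g [] = 0" "\<And>x. g [x] = 0" using assms by auto
  show "length w < 2 \<Longrightarrow> tmult (tmult a g) b w = 0"
    using g by (cases w rule: list.exhaust[case_product list.exhaust[of "tl w"]])
      (auto simp: tmult_Cons tmult_Nil)
  show "tmult (tmult a g) b [u, v] = a [] * g [u, v] * b []"
    using g by (simp add: tmult_Cons tmult_Nil)
qed

definition cover_sum :: "'v \<Rightarrow> ('v \<times> 'v) set \<Rightarrow> 'v list \<Rightarrow> 'k::field" where
  "cover_sum v E = (\<lambda>u. \<Sum>w\<in>{w. (v, w) \<in> E}. tmono [v, w] u)"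

lemma cover_sum_eq:
  assumes "finite {w. (v, w) \<in> E}"
  shows "cover_sum v E x = (if \<exists>w. x = [v, w] \<and> (v, w) \<in> E then 1 else 0)"
proof (cases "\<exists>w. x = [v, w] \<and> (v, w) \<in> E")
  case True
  then obtain w0 where w0: "x = [v, w0]" "(v, w0) \<in> E" by blast
  have "cover_sum v E x = (\<Sum>w\<in>{w. (v, w) \<in> E}. if w0 = w then 1 else 0)"
    unfolding cover_sum_def tmono_def w0 by (intro sum.cong) auto
  with assms w0 show ?thesis by simp
next
  case False
  then show ?thesis unfolding cover_sum_def tmono_def by (auto intro!: sum.neutral)
qed

lemma RB_gens_eq: "RB_gens V rk E =
     {tmono [v, w] | v w. v \<in> Vplus V rk \<and> w \<in> Vplus V rk \<and> (v, w) \<notin> E} \<union>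
     {cover_sum v E | v. v \<in> V \<and> rk v \<ge> 2}"
  unfolding RB_gens_def cover_sum_def by simp

lemma RB_gens_vanish: "g \<in> RB_gens V rk E \<Longrightarrow> length w \<noteq> 2 \<Longrightarrow> g w = 0"
  unfolding RB_gens_def by (auto simp: tmono_def intro!: sum.neutral)

lemma RB_vanish_short: "z \<in> RB V rk E \<Longrightarrow> length w < 2 \<Longrightarrow> z w = 0"
  unfolding RB_def
proof (induction arbitrary: w rule: tideal.induct)
  case (gen g a b)
  then show ?case using tmult_vanishing_short(1) RB_gens_vanish by (metis less_not_refl)
qed (simp_all add: tadd_def)

lemma tvec_eq_if_tsub_RB: "tsub (tvec g) (tvec g') \<in> RB V rk E \<Longrightarrow> g = g'"
proof
  fix q assume "tsub (tvec g) (tvec g') \<in> RB V rk E"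
  then have "tsub (tvec g) (tvec g') [q] = 0" using RB_vanish_short by fastforce
  then show "g q = g' q" by (simp add: tsub_def)
qed

lemmas RB_tsub_sym = tsub_tideal_sym[where W = "Vplus V rk" and G = "RB_gens V rk E", folded RB_def]
  for V rk E
lemmas RB_tsub_trans = tsub_tideal_trans[where W = "Vplus V rk" and G = "RB_gens V rk E", folded RB_def]
  for V rk E
lemmas RB_tsub_linear =
  tsub_tideal_linear[where W = "Vplus V rk" and G = "RB_gens V rk E", folded RB_def]
  for V rk E
lemmas RB_tsub_tmult = tsub_tideal_tmult[where W = "Vplus V rk" and G = "RB_gens V rk E", folded RB_def]
  for V rk E
lemmas RB_iff_tsub_RB =
  tideal_iff_tsub_tideal[where W = "Vplus V rk" and G = "RB_gens V rk E", folded RB_def]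
  for V rk E
lemmas RB_tscale = tideal_tscale[where W = "Vplus V rk" and G = "RB_gens V rk E", folded RB_def]
  for V rk E

definition layer :: "'v set \<Rightarrow> ('v \<Rightarrow> nat) \<Rightarrow> nat \<Rightarrow> 'v set" where
  "layer V rk i = {u\<in>V. rk u = i}"

definition vecs :: "'v set \<Rightarrow> ('v \<Rightarrow> 'k::zero) set" where
  "vecs S = {f. \<forall>u. f u \<noteq> 0 \<longrightarrow> u \<in> S}"

definition delta :: "'v \<Rightarrow> 'v \<Rightarrow> 'k::{zero,one}" where
  "delta u = (\<lambda>v. if v = u then 1 else 0)"

definition const_on :: "('v \<Rightarrow> 'k) \<Rightarrow> 'v set \<Rightarrow> bool" where
  "const_on h S \<longleftrightarrow> (\<forall>w1\<in>S. \<forall>w2\<in>S. h w1 = h w2)"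

definition nb :: "('v \<times> 'v) set \<Rightarrow> 'v \<Rightarrow> 'v set" where
  "nb E u = {w. (u, w) \<in> E}"

lemma vecs_zero: "(\<lambda>_. 0) \<in> vecs S"
  by (simp add: vecs_def)

lemma vecs_linear:
  "f \<in> vecs S \<Longrightarrow> g \<in> vecs S \<Longrightarrow> (\<lambda>u. (c::'k::field) * f u + g u) \<in> vecs S"
  by (simp add: vecs_def) (metis add_0 mult_zero_right)

lemma delta_vecs: "u \<in> S \<Longrightarrow> (\<lambda>v. (c::'k::field) * delta u v) \<in> vecs S"
  by (auto simp: vecs_def delta_def)

lemma delta_in_vecs: "u \<in> S \<Longrightarrow> (delta u :: 'v \<Rightarrow> 'k::zero_neq_one) \<in> vecs S"
  by (auto simp: vecs_def delta_def)

lemma delta_nonzero: "delta u \<noteq> (\<lambda>_. 0 :: 'k::zero_neq_one)"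
proof
  assume "delta u = (\<lambda>_. 0 :: 'k)"
  then have "(delta u u :: 'k) = 0" by simp
  then show False by (simp add: delta_def)
qed

lemma tvec_homog: "f \<in> vecs (layer V rk i) \<Longrightarrow> homog rk 1 i (tvec f)"
  unfolding homog_def by (auto simp: vecs_def layer_def elim!: tvec_nonzeroE)

lemma const_on_delta_iff:
  assumes "2 \<le> card S"
  shows "const_on (delta v :: 'v \<Rightarrow> 'k::zero_neq_one) S \<longleftrightarrow> v \<notin> S"
proof
  assume c: "const_on (delta v :: 'v \<Rightarrow> 'k) S"
  show "v \<notin> S"
  proof
    assume "v \<in> S"
    moreover have "\<not> S \<subseteq> {v}"
      using assms card_mono[of "{v}" S] by auto
    then obtain w where "w \<in> S" "w \<noteq> v" by blast
    ultimately have "(delta v v :: 'k) = delta v w" using c unfolding const_on_def by blast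
    with \<open>w \<noteq> v\<close> show False by (simp add: delta_def)
  qed
qed (auto simp: const_on_def delta_def)

lemma const_on_card_le_1: "finite S \<Longrightarrow> card S \<le> 1 \<Longrightarrow> const_on h S"
  by (auto simp: const_on_def card_le_Suc0_iff_eq)

lemma vecs_induct [consumes 2, case_names zero delta]:
  assumes "finite S" "f \<in> vecs S"
    and zero: "P (\<lambda>_. 0)"
    and delta: "\<And>c u f. u \<in> S \<Longrightarrow> f \<in> vecs S \<Longrightarrow> P f \<Longrightarrow> P (\<lambda>v. c * delta u v + f v)"
  shows "P (f :: 'v \<Rightarrow> 'k::field)"
  using assms(2)
proof (induction "card {v. f v \<noteq> 0}" arbitrary: f rule: less_induct)
  case less
  show ?case
  proof (cases "\<exists>u. f u \<noteq> 0")
    case False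
    then have "f = (\<lambda>_. 0)" by auto
    then show ?thesis using zero by simp
  next
    case True
    then obtain u where u: "f u \<noteq> 0" by blast
    then have uS: "u \<in> S" using less.prems by (simp add: vecs_def)
    define f' where "f' = (\<lambda>v. if v = u then 0 else f v)"
    have f': "f' \<in> vecs S" using less.prems by (auto simp: f'_def vecs_def)
    have "{v. f v \<noteq> 0} \<subseteq> S" using less.prems by (auto simp: vecs_def)
    moreover have "{v. f' v \<noteq> 0} \<subset> {v. f v \<noteq> 0}" using u by (auto simp: f'_def)
    ultimately have "P f'"
      using less.hyps f' assms(1) by (meson finite_subset psubset_card_mono)
    moreover have "f = (\<lambda>v. f u * delta u v + f' v)"
      by (auto simp: f'_def delta_def)
    ultimately show ?thesis using delta uS f' by metis
  qed
qed

section \<open>The relations of a layered graph in word length two\<close>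

definition edge_invariant :: "('v \<times> 'v) set \<Rightarrow> ('v list \<Rightarrow> 'k) \<Rightarrow> bool" where
  "edge_invariant E z \<longleftrightarrow> (\<forall>u w1 w2. (u, w1) \<in> E \<longrightarrow> (u, w2) \<in> E \<longrightarrow> z [u, w1] = z [u, w2])"

lemma edge_invariantD:
  "edge_invariant E z \<Longrightarrow> (u, w1) \<in> E \<Longrightarrow> (u, w2) \<in> E \<Longrightarrow> z [u, w1] = z [u, w2]"
  unfolding edge_invariant_def by blast

lemma edge_invariant_tsub:
  assumes "edge_invariant E z" "edge_invariant E g"
  shows "edge_invariant E (tsub z (tscale c g))"
  unfolding edge_invariant_def
proof (intro allI impI)
  fix u w1 w2 assume "(u, w1) \<in> E" "(u, w2) \<in> E"
  with assms have "z [u, w1] = z [u, w2]" "g [u, w1] = g [u, w2]" by (blast dest: edge_invariantD)+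
  then show "tsub z (tscale c g) [u, w1] = tsub z (tscale c g) [u, w2]"
    by (simp add: tsub_def tscale_def)
qed

locale layered_graph =
  fixes V :: "'v set" and rk :: "'v \<Rightarrow> nat" and E :: "('v \<times> 'v) set"
  assumes finite_V: "finite V"
    and edges_subset: "E \<subseteq> V \<times> V"
    and rank_edge: "(u, w) \<in> E \<Longrightarrow> rk u = Suc (rk w)"
begin

lemma finite_layer: "finite (layer V rk i)"
  using finite_V by (simp add: layer_def)

lemma layer_subset_Vplus: "1 \<le> i \<Longrightarrow> layer V rk i \<subseteq> Vplus V rk"
  by (auto simp: layer_def Vplus_def)

lemma finite_nb: "finite (nb E u)"
  using edges_subset finite_V by (auto simp: nb_def intro: finite_subset)

lemma nb_subset_layer: "u \<in> layer V rk i \<Longrightarrow> nb E u \<subseteq> layer V rk (i - 1)"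
  using edges_subset rank_edge by (force simp: nb_def layer_def)

lemma tvec_tens: "1 \<le> i \<Longrightarrow> f \<in> vecs (layer V rk i) \<Longrightarrow> tvec f \<in> tens (Vplus V rk)"
proof -
  assume i: "1 \<le> i" and f: "f \<in> vecs (layer V rk i)"
  have supp: "{w. tvec f w \<noteq> 0} \<subseteq> (\<lambda>u. [u]) ` layer V rk i"
    using f by (auto simp: vecs_def elim!: tvec_nonzeroE)
  have "set w \<subseteq> Vplus V rk" if nz: "tvec f w \<noteq> 0" for w
  proof -
    obtain u where "w = [u]" "u \<in> layer V rk i" using nz supp by blast
    then show ?thesis using layer_subset_Vplus[OF i] by auto
  qed
  then show ?thesis
    using supp finite_layer unfolding tens_def by (auto intro: finite_subset)
qed

lemma RB_gens_edge_invariant: "g \<in> RB_gens V rk E \<Longrightarrow> edge_invariant E g"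
  using finite_nb unfolding RB_gens_eq nb_def edge_invariant_def
  by (auto simp: tmono_def cover_sum_eq)

lemma RB_edge_invariant: "z \<in> RB V rk E \<Longrightarrow> edge_invariant E z"
  unfolding RB_def
proof (induction rule: tideal.induct)
  case zero
  then show ?case by (simp add: edge_invariant_def)
next
  case (gen g a b)
  have "\<And>w. length w < 2 \<Longrightarrow> g w = 0" using RB_gens_vanish[OF gen(1)] by fastforce
  note g_uv = tmult_vanishing_short(2)[OF this]
  show ?case unfolding edge_invariant_def
  proof (intro allI impI)
    fix u w1 w2 assume "(u, w1) \<in> E" "(u, w2) \<in> E"
    then have "g [u, w1] = g [u, w2]" by (rule edge_invariantD[OF RB_gens_edge_invariant[OF gen(1)]])
    then show "tmult (tmult a g) b [u, w1] = tmult (tmult a g) b [u, w2]" by (simp add: g_uv)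
  qed
next
  case (add x y)
  show ?case unfolding edge_invariant_def
  proof (intro allI impI)
    fix u w1 w2 assume "(u, w1) \<in> E" "(u, w2) \<in> E"
    then have "x [u, w1] = x [u, w2]" "y [u, w1] = y [u, w2]"
      by (blast intro: edge_invariantD[OF add.IH(1)] edge_invariantD[OF add.IH(2)])+
    then show "tadd x y [u, w1] = tadd x y [u, w2]" by (simp add: tadd_def)
  qed
qed

lemma RB_gen_through:
  fixes z :: "'v list \<Rightarrow> 'k::field"
  assumes uv: "u \<in> Vplus V rk" "v \<in> Vplus V rk"
    and inv: "edge_invariant E z"
  obtains g :: "'v list \<Rightarrow> 'k" where "g \<in> RB_gens V rk E" "g [u, v] = 1"
    and "\<And>w. g w \<noteq> 0 \<Longrightarrow> g w = 1 \<and> z w = z [u, v]"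
proof (cases "(u, v) \<in> E")
  case False
  then have "tmono [u, v] \<in> RB_gens V rk E" using uv unfolding RB_gens_eq by blast
  then show ?thesis
    by (rule that[of "tmono [u, v]"]) (auto simp: tmono_def split: if_splits)
next
  case True
  then have "u \<in> V" "rk u \<ge> 2"
    using edges_subset rank_edge[OF True] uv(2) by (auto simp: Vplus_def)
  moreover define c where "c = z [u, v]"
  then have "z [u, w] = c" if "(u, w) \<in> E" for w
    using edge_invariantD[OF inv that True] by simp
  ultimately have "cover_sum u E \<in> RB_gens V rk E \<and> cover_sum u E [u, v] = 1 \<and>
      (\<forall>w. cover_sum u E w \<noteq> 0 \<longrightarrow> cover_sum u E w = 1 \<and> z w = c)"
    using finite_nb True unfolding nb_def by (auto simp: RB_gens_eq cover_sum_eq)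
  then show ?thesis using that unfolding c_def by blast
qed

text \<open>Peel off, one word at a time, a multiple of the generator through it.\<close>

lemma RB_degree2_memI:
  fixes z :: "'v list \<Rightarrow> 'k::field"
  assumes "finite {w. z w \<noteq> 0}"
    and "\<forall>w. z w \<noteq> 0 \<longrightarrow> (\<exists>u v. w = [u, v] \<and> u \<in> Vplus V rk \<and> v \<in> Vplus V rk)"
    and "edge_invariant E z"
  shows "z \<in> RB V rk E"
  using assms
proof (induction "card {w. z w \<noteq> 0}" arbitrary: z rule: less_induct)
  case less
  note fin = less.prems(1) and supp = less.prems(2) and inv = less.prems(3)
  show ?case
  proof (cases "\<exists>w0. z w0 \<noteq> 0")
    case False
    then have "z = (\<lambda>_. 0)" by auto
    then show ?thesis unfolding RB_def by (simp add: tideal.zero)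
  next
    case True
    then obtain u v where uv: "z [u, v] \<noteq> 0" "u \<in> Vplus V rk" "v \<in> Vplus V rk"
      using supp by blast
    define c where "c = z [u, v]"
    obtain g :: "'v list \<Rightarrow> 'k" where g: "g \<in> RB_gens V rk E" "g [u, v] = 1"
      and g_supp: "\<And>w. g w \<noteq> 0 \<Longrightarrow> g w = 1 \<and> z w = c"
      using RB_gen_through[OF uv(2,3) inv] unfolding c_def by blast
    define z' where "z' = tsub z (tscale c g)"
    have z'_eq: "z' w = (if g w \<noteq> 0 then 0 else z w)" for w
      using g_supp[of w] by (auto simp: z'_def tsub_def tscale_def)
    have smaller: "{w. z' w \<noteq> 0} \<subseteq> {w. z w \<noteq> 0} - {[u, v]}"
      using g(2) by (auto simp: z'_eq)
    have "z' \<in> RB V rk E"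
    proof (rule less.hyps)
      show "card {w. z' w \<noteq> 0} < card {w. z w \<noteq> 0}"
        using smaller fin uv(1) by (intro psubset_card_mono) auto
      show "finite {w. z' w \<noteq> 0}" using smaller fin by (auto intro: finite_subset)
      show "\<forall>w. z' w \<noteq> 0 \<longrightarrow> (\<exists>u v. w = [u, v] \<and> u \<in> Vplus V rk \<and> v \<in> Vplus V rk)"
        using smaller supp by blast
      show "edge_invariant E z'"
        unfolding z'_def using inv RB_gens_edge_invariant[OF g(1)] by (rule edge_invariant_tsub)
    qed
    moreover have "tscale c g \<in> RB V rk E"
      unfolding RB_def using g(1) by (intro tideal_tscale tideal_generator)
    moreover have "z = tadd z' (tscale c g)"
      by (auto simp: z'_def tsub_def tadd_def)
    ultimately show ?thesis unfolding RB_def by (metis tideal.add)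
  qed
qed

lemma tmult_tvec_RB_iff:
  fixes f h :: "'v \<Rightarrow> 'k::field"
  assumes i: "2 \<le> i" and f: "f \<in> vecs (layer V rk i)" and h: "h \<in> vecs (layer V rk (i - 1))"
  shows "tmult (tvec f) (tvec h) \<in> RB V rk E \<longleftrightarrow> (\<forall>u. f u \<noteq> 0 \<longrightarrow> const_on h (nb E u))"
proof
  assume z: "tmult (tvec f) (tvec h) \<in> RB V rk E"
  have "f u * h w1 = f u * h w2" if "(u, w1) \<in> E" "(u, w2) \<in> E" for u w1 w2
    using edge_invariantD[OF RB_edge_invariant[OF z] that] by (simp add: tmult_tvec)
  then show "\<forall>u. f u \<noteq> 0 \<longrightarrow> const_on h (nb E u)"
    by (auto simp: const_on_def nb_def)
next
  assume c: "\<forall>u. f u \<noteq> 0 \<longrightarrow> const_on h (nb E u)"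
  let ?z = "tmult (tvec f) (tvec h)"
  have supp: "{w. ?z w \<noteq> 0} \<subseteq> (\<lambda>(u, v). [u, v]) ` (layer V rk i \<times> layer V rk (i - 1))"
    using f h by (auto simp: tmult_tvec length2_conv vecs_def split: if_splits)
  show "?z \<in> RB V rk E"
  proof (rule RB_degree2_memI)
    show "finite {w. ?z w \<noteq> 0}"
      using finite_subset[OF supp] finite_layer by blast
    show "\<forall>w. ?z w \<noteq> 0 \<longrightarrow> (\<exists>u v. w = [u, v] \<and> u \<in> Vplus V rk \<and> v \<in> Vplus V rk)"
    proof (intro allI impI)
      fix w assume "?z w \<noteq> 0"
      then have "w \<in> (\<lambda>(u, v). [u, v]) ` (layer V rk i \<times> layer V rk (i - 1))"
        using supp by blast
      then obtain u v where "w = [u, v]" "u \<in> layer V rk i" "v \<in> layer V rk (i - 1)"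
        by auto
      moreover have "1 \<le> i - 1" using i by simp
      ultimately show "\<exists>u v. w = [u, v] \<and> u \<in> Vplus V rk \<and> v \<in> Vplus V rk"
        using layer_subset_Vplus[of i] layer_subset_Vplus[of "i - 1"] i by auto
    qed
    show "edge_invariant E ?z"
      using c by (auto simp: edge_invariant_def tmult_tvec const_on_def nb_def)
  qed
qed

section \<open>Annihilators of degree-one elements\<close>

text \<open>By \<open>tmult_tvec_RB_iff\<close>, \<open>annih i f\<close> is the set of \<open>h\<close> of bidegree
  \<open>(1, i - 1)\<close> with \<open>f h = 0\<close> in \<open>B\<close>.\<close>

definition annih :: "nat \<Rightarrow> ('v \<Rightarrow> 'k::field) \<Rightarrow> ('v \<Rightarrow> 'k) set" where
  "annih i f = {h \<in> vecs (layer V rk (i - 1)). \<forall>u. f u \<noteq> 0 \<longrightarrow> const_on h (nb E u)}"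

definition annih_maximal :: "nat \<Rightarrow> ('v \<Rightarrow> 'k::field) \<Rightarrow> bool" where
  "annih_maximal i f \<longleftrightarrow> f \<in> vecs (layer V rk i) \<and> f \<noteq> (\<lambda>_. 0) \<and>
     (\<forall>f'\<in>vecs (layer V rk i). f' \<noteq> (\<lambda>_. 0) \<longrightarrow> annih i f \<subseteq> annih i f' \<longrightarrow> annih i f = annih i f')"

definition good_layer :: "nat \<Rightarrow> bool" where
  "good_layer i \<longleftrightarrow> (\<forall>u\<in>layer V rk i. 2 \<le> card (nb E u)) \<and>
     (\<forall>u\<in>layer V rk i. \<forall>u'\<in>layer V rk i. u \<noteq> u' \<longrightarrow> \<not> nb E u \<subseteq> nb E u')"

lemma annih_maximalD:
  "annih_maximal i f \<Longrightarrow> f' \<in> vecs (layer V rk i) \<Longrightarrow> f' \<noteq> (\<lambda>_. 0) \<Longrightarrow>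
   annih i f \<subseteq> annih i f' \<Longrightarrow> annih i f = annih i f'"
  unfolding annih_maximal_def by blast

lemma annih_cong_support: "(\<And>u. f u \<noteq> 0 \<longleftrightarrow> f' u \<noteq> 0) \<Longrightarrow> annih i f = annih i f'"
  unfolding annih_def by simp

lemma annih_subset_annih_delta: "f u \<noteq> 0 \<Longrightarrow> annih i f \<subseteq> annih i (delta u)"
  unfolding annih_def delta_def by auto

lemma annih_delta: "annih i (delta u) = {h \<in> vecs (layer V rk (i - 1)). const_on h (nb E u)}"
  unfolding annih_def delta_def by auto

lemma delta_in_annih_delta_iff:
  assumes "2 \<le> card (nb E u)" "v \<in> layer V rk (i - 1)"
  shows "(delta v :: 'v \<Rightarrow> 'k::field) \<in> annih i (delta u) \<longleftrightarrow> v \<notin> nb E u"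
  using const_on_delta_iff[OF assms(1), where 'k = 'k] delta_in_vecs[OF assms(2), where 'k = 'k]
  by (simp add: annih_delta)

lemma good_layer_annih_delta_inj:
  assumes "good_layer i" "u \<in> layer V rk i" "u' \<in> layer V rk i"
    and "annih i (delta u :: 'v \<Rightarrow> 'k::field) \<subseteq> annih i (delta u')"
  shows "u = u'"
proof (rule ccontr)
  assume "u \<noteq> u'"
  with assms(1-3) have "\<not> nb E u' \<subseteq> nb E u" unfolding good_layer_def by fastforce
  then obtain w where w: "w \<in> nb E u'" "w \<notin> nb E u" by blast
  have wl: "w \<in> layer V rk (i - 1)" using w(1) nb_subset_layer[OF assms(3)] by blast
  have "2 \<le> card (nb E u)" "2 \<le> card (nb E u')"
    using assms(1-3) by (auto simp: good_layer_def)
  note delta_w = this[THEN delta_in_annih_delta_iff[OF _ wl, where 'k = 'k]]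
  have "(delta w :: 'v \<Rightarrow> 'k) \<in> annih i (delta u')"
    using assms(4) delta_w(1) w(2) by blast
  with delta_w(2) w(1) show False by blast
qed

lemma annih_maximal_delta:
  assumes good: "good_layer i" and u: "u \<in> layer V rk i"
  shows "annih_maximal i (delta u :: 'v \<Rightarrow> 'k::field)"
  unfolding annih_maximal_def
proof (intro conjI ballI impI)
  show "(delta u :: 'v \<Rightarrow> 'k) \<in> vecs (layer V rk i)" using delta_in_vecs[OF u] .
  show "delta u \<noteq> (\<lambda>_. 0 :: 'k)" by (rule delta_nonzero)
  fix f' :: "'v \<Rightarrow> 'k"
  assume f': "f' \<in> vecs (layer V rk i)" "f' \<noteq> (\<lambda>_. 0)" and sub: "annih i (delta u) \<subseteq> annih i f'"
  have supp: "v = u" if "f' v \<noteq> 0" for v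
  proof -
    have "v \<in> layer V rk i" using f'(1) that by (simp add: vecs_def)
    moreover have "annih i (delta u) \<subseteq> annih i (delta v :: 'v \<Rightarrow> 'k)"
      using sub annih_subset_annih_delta[of f' v i, OF that] by blast
    ultimately have "u = v" by (rule good_layer_annih_delta_inj[OF good u])
    then show "v = u" ..
  qed
  with f'(2) have fu: "f' u \<noteq> 0" by auto
  show "annih i (delta u) = annih i f'"
  proof (rule annih_cong_support)
    fix v show "(delta u v :: 'k) \<noteq> 0 \<longleftrightarrow> f' v \<noteq> 0"
      using fu by (cases "v = u") (auto simp: delta_def dest: supp)
  qed
qed

lemma annih_maximal_imp_single_support:
  assumes good: "good_layer i" and max: "annih_maximal i (f :: 'v \<Rightarrow> 'k::field)"
  obtains u where "u \<in> layer V rk i" "\<And>v. f v \<noteq> 0 \<longleftrightarrow> v = u"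
proof -
  have f: "f \<in> vecs (layer V rk i)" "f \<noteq> (\<lambda>_. 0)" using max by (auto simp: annih_maximal_def)
  then obtain u where fu: "f u \<noteq> 0" by auto
  have u: "u \<in> layer V rk i" using f(1) fu by (simp add: vecs_def)
  have eq: "annih i f = annih i (delta u)"
    using annih_subset_annih_delta[of f u i, OF fu]
    by (rule annih_maximalD[OF max delta_in_vecs[OF u] delta_nonzero])
  have "v = u" if "f v \<noteq> 0" for v
  proof -
    have "v \<in> layer V rk i" using f(1) that by (simp add: vecs_def)
    then show "v = u"
      using good_layer_annih_delta_inj[OF good u] eq annih_subset_annih_delta[of f v i, OF that]
      by auto
  qed
  with fu u that show ?thesis by blast
qed

lemma annih_maximal_delta_of_support:
  assumes max: "annih_maximal i (g :: 'v \<Rightarrow> 'k::field)" and q: "g q \<noteq> 0"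
  shows "annih_maximal i (delta q :: 'v \<Rightarrow> 'k)" "annih i (delta q) = annih i g"
proof -
  have qi: "q \<in> layer V rk i" using max q by (auto simp: annih_maximal_def vecs_def)
  have "annih i g = annih i (delta q)"
    using annih_subset_annih_delta[of g q i, OF q]
    by (rule annih_maximalD[OF max delta_in_vecs[OF qi] delta_nonzero])
  then show eq: "annih i (delta q) = annih i g" ..
  show "annih_maximal i (delta q :: 'v \<Rightarrow> 'k)"
    using max delta_in_vecs[OF qi] delta_nonzero[of q, where 'k = 'k]
    unfolding annih_maximal_def eq by simp
qed

end

section \<open>Transport along a doubly graded isomorphism\<close>

lemma homog_1_eq_tvec: "homog rk 1 i y \<Longrightarrow> y = tvec (\<lambda>q. y [q])"
  unfolding homog_def tvec_def
  by (rule ext) (metis One_nat_def length_0_conv length_Suc_conv list.sel(1))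

definition deg1_part :: "'v set \<Rightarrow> ('v \<Rightarrow> nat) \<Rightarrow> nat \<Rightarrow> ('v list \<Rightarrow> 'k::field) \<Rightarrow> 'v \<Rightarrow> 'k" where
  "deg1_part V rk i x = (\<lambda>u. if u \<in> layer V rk i then x [u] else 0)"

lemma deg1_part_vecs: "deg1_part V rk i x \<in> vecs (layer V rk i)"
  by (auto simp: deg1_part_def vecs_def)

lemma deg1_part_tvec: "g \<in> vecs (layer V rk i) \<Longrightarrow> deg1_part V rk i (tvec g) = g"
  unfolding deg1_part_def vecs_def by (rule ext) auto

lemma deg1_part_linear:
  "deg1_part V rk i (tadd (tscale c y) y') = (\<lambda>q. c * deg1_part V rk i y q + deg1_part V rk i y' q)"
  by (auto simp: deg1_part_def tadd_def tscale_def)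

lemma deg1_part_cong: "tsub y y' \<in> RB V rk E \<Longrightarrow> deg1_part V rk i y = deg1_part V rk i y'"
  using RB_vanish_short[of "tsub y y'" V rk E "[_]"] by (auto simp: deg1_part_def tsub_def)

locale B_iso = G1: layered_graph V1 rk1 E1 + G2: layered_graph V2 rk2 E2
  for V1 :: "'a set" and rk1 E1 and V2 :: "'b set" and rk2 E2 +
  fixes phi :: "('a list \<Rightarrow> 'k::field) \<Rightarrow> ('b list \<Rightarrow> 'k)"
  assumes iso: "graded_B_iso V1 rk1 E1 V2 rk2 E2 phi"
begin

abbreviation "T1 \<equiv> tens (Vplus V1 rk1) :: ('a list \<Rightarrow> 'k) set"
abbreviation "T2 \<equiv> tens (Vplus V2 rk2) :: ('b list \<Rightarrow> 'k) set"
abbreviation "I1 \<equiv> RB V1 rk1 E1 :: ('a list \<Rightarrow> 'k) set"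
abbreviation "I2 \<equiv> RB V2 rk2 E2 :: ('b list \<Rightarrow> 'k) set"

lemma phi_tens: "x \<in> T1 \<Longrightarrow> phi x \<in> T2"
  using iso unfolding graded_B_iso_def Let_def by blast

lemma phi_RB_tsub_iff: "x \<in> T1 \<Longrightarrow> y \<in> T1 \<Longrightarrow> tsub x y \<in> I1 \<longleftrightarrow> tsub (phi x) (phi y) \<in> I2"
  using iso unfolding graded_B_iso_def Let_def by blast

lemma phi_surj: "z \<in> T2 \<Longrightarrow> \<exists>x\<in>T1. tsub (phi x) z \<in> I2"
  using iso unfolding graded_B_iso_def Let_def by blast

lemma phi_linear:
  "x \<in> T1 \<Longrightarrow> y \<in> T1 \<Longrightarrow> tsub (phi (tadd (tscale c x) y)) (tadd (tscale c (phi x)) (phi y)) \<in> I2"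
  using iso unfolding graded_B_iso_def Let_def by blast

lemma phi_tmult: "x \<in> T1 \<Longrightarrow> y \<in> T1 \<Longrightarrow> tsub (phi (tmult x y)) (tmult (phi x) (phi y)) \<in> I2"
  using iso unfolding graded_B_iso_def Let_def by blast

lemma phi_homog:
  "x \<in> T1 \<Longrightarrow> homog rk1 m n x \<Longrightarrow> \<exists>y\<in>T2. homog rk2 m n y \<and> tsub (phi x) y \<in> I2"
  using iso unfolding graded_B_iso_def Let_def by blast

lemma phi_zero: "phi (\<lambda>_. 0) \<in> I2"
proof -
  have "tadd (tscale 1 (\<lambda>_. 0)) (\<lambda>_. 0) = (\<lambda>_::'a list. 0::'k)"
    by (simp add: tadd_def tscale_def)
  then have "tsub (phi (\<lambda>_. 0)) (tadd (tscale 1 (phi (\<lambda>_. 0))) (phi (\<lambda>_. 0))) \<in> I2"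
    using phi_linear[OF tens_zero tens_zero, of 1] by simp
  moreover have "phi (\<lambda>_. 0) =
      tscale (-1) (tsub (phi (\<lambda>_. 0)) (tadd (tscale 1 (phi (\<lambda>_. 0))) (phi (\<lambda>_. 0))))"
    by (auto simp: tsub_def tadd_def tscale_def)
  ultimately show ?thesis by (metis RB_tscale)
qed

lemma phi_RB_iff: "x \<in> T1 \<Longrightarrow> x \<in> I1 \<longleftrightarrow> phi x \<in> I2"
proof -
  assume x: "x \<in> T1"
  have "tsub x (\<lambda>_. 0) = x" by (simp add: tsub_def)
  moreover have "tsub (tsub (phi x) (phi (\<lambda>_. 0))) (phi x) = tscale (-1) (phi (\<lambda>_. 0))"
    by (auto simp: tsub_def tscale_def)
  then have "tsub (phi x) (phi (\<lambda>_. 0)) \<in> I2 \<longleftrightarrow> phi x \<in> I2"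
    using RB_iff_tsub_RB RB_tscale[OF phi_zero] by metis
  ultimately show ?thesis using phi_RB_tsub_iff[OF x tens_zero] by metis
qed

lemma phi_tvec_homog:
  assumes "1 \<le> i" "f \<in> vecs (layer V1 rk1 i)"
  shows "\<exists>g. g \<in> vecs (layer V2 rk2 i) \<and> tsub (phi (tvec f)) (tvec g) \<in> I2"
proof -
  obtain y where y: "y \<in> T2" "homog rk2 1 i y" "tsub (phi (tvec f)) y \<in> I2"
    using phi_homog[OF G1.tvec_tens[OF assms] tvec_homog[OF assms(2)]] by blast
  have "(\<lambda>q. y [q]) \<in> vecs (layer V2 rk2 i)"
    using y(1,2) by (auto simp: vecs_def homog_def tens_def layer_def Vplus_def)
  with y(3) homog_1_eq_tvec[OF y(2)] show ?thesis by metis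
qed

definition phi1 :: "nat \<Rightarrow> ('a \<Rightarrow> 'k) \<Rightarrow> ('b \<Rightarrow> 'k)" where
  "phi1 i f = (SOME g. g \<in> vecs (layer V2 rk2 i) \<and> tsub (phi (tvec f)) (tvec g) \<in> I2)"

lemma phi1:
  assumes "1 \<le> i" "f \<in> vecs (layer V1 rk1 i)"
  shows "phi1 i f \<in> vecs (layer V2 rk2 i)" "tsub (phi (tvec f)) (tvec (phi1 i f)) \<in> I2"
  using someI_ex[OF phi_tvec_homog[OF assms]] unfolding phi1_def by blast+

lemma phi1_unique:
  assumes "1 \<le> i" "f \<in> vecs (layer V1 rk1 i)" "tsub (phi (tvec f)) (tvec g) \<in> I2"
  shows "phi1 i f = g"
  using RB_tsub_trans[OF RB_tsub_sym[OF phi1(2)[OF assms(1,2)]] assms(3)]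
  by (rule tvec_eq_if_tsub_RB)

lemma phi1_linear:
  assumes "1 \<le> i" "f \<in> vecs (layer V1 rk1 i)" "f' \<in> vecs (layer V1 rk1 i)"
  shows "phi1 i (\<lambda>u. c * f u + f' u) = (\<lambda>q. c * phi1 i f q + phi1 i f' q)"
proof (rule phi1_unique[OF assms(1) vecs_linear[OF assms(2,3)]])
  show "tsub (phi (tvec (\<lambda>u. c * f u + f' u))) (tvec (\<lambda>q. c * phi1 i f q + phi1 i f' q)) \<in> I2"
    unfolding tvec_linear
    using RB_tsub_trans[OF phi_linear[OF G1.tvec_tens[OF assms(1,2)] G1.tvec_tens[OF assms(1,3)]]
        RB_tsub_linear[OF phi1(2)[OF assms(1,2)] phi1(2)[OF assms(1,3)]]] .
qed

lemma phi1_zero: "1 \<le> i \<Longrightarrow> phi1 i (\<lambda>_. 0) = (\<lambda>_. 0)"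
  using phi_zero by (intro phi1_unique) (simp_all add: vecs_zero tvec_zero tsub_def)

lemma phi1_scale:
  assumes "1 \<le> i" "f \<in> vecs (layer V1 rk1 i)"
  shows "phi1 i (\<lambda>u. c * f u) = (\<lambda>q. c * phi1 i f q)"
  using phi1_linear[OF assms vecs_zero, of c] phi1_zero[OF assms(1)] by simp

lemma phi1_inj:
  assumes "1 \<le> i" "f \<in> vecs (layer V1 rk1 i)" "f' \<in> vecs (layer V1 rk1 i)" "phi1 i f = phi1 i f'"
  shows "f = f'"
proof -
  have "tsub (phi (tvec f)) (phi (tvec f')) \<in> I2"
    using RB_tsub_trans[OF phi1(2)[OF assms(1,2), unfolded assms(4)]
        RB_tsub_sym[OF phi1(2)[OF assms(1,3)]]] .
  then have "tsub (tvec f) (tvec f') \<in> I1"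
    using phi_RB_tsub_iff G1.tvec_tens assms(1-3) by blast
  then show ?thesis by (rule tvec_eq_if_tsub_RB)
qed

lemma phi1_eq_zero_iff:
  "1 \<le> i \<Longrightarrow> f \<in> vecs (layer V1 rk1 i) \<Longrightarrow> phi1 i f = (\<lambda>_. 0) \<longleftrightarrow> f = (\<lambda>_. 0)"
  using phi1_inj[OF _ _ vecs_zero] phi1_zero by metis

lemma deg1_part_phi_tmono:
  assumes i: "1 \<le> i" and w: "set w \<subseteq> Vplus V1 rk1"
  shows "deg1_part V2 rk2 i (phi (tmono w)) = phi1 i (deg1_part V1 rk1 i (tmono w))"
proof (cases "\<exists>u. w = [u] \<and> u \<in> layer V1 rk1 i")
  case True
  then obtain u where u: "w = [u]" "u \<in> layer V1 rk1 i" by blast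
  have d: "(delta u :: 'a \<Rightarrow> 'k) \<in> vecs (layer V1 rk1 i)" using delta_in_vecs[OF u(2)] .
  have w_eq: "tmono w = tvec (delta u)"
    unfolding u(1) tvec_def tmono_def delta_def by (rule ext) (auto simp: length_Suc_conv)
  have "deg1_part V2 rk2 i (phi (tvec (delta u))) = deg1_part V2 rk2 i (tvec (phi1 i (delta u)))"
    by (rule deg1_part_cong[OF phi1(2)[OF i d]])
  also have "\<dots> = phi1 i (deg1_part V1 rk1 i (tvec (delta u)))"
    by (simp add: deg1_part_tvec phi1(1)[OF i d] d)
  finally show ?thesis unfolding w_eq .
next
  case False
  then have zero1: "deg1_part V1 rk1 i (tmono w) = (\<lambda>_. 0)"
    by (auto simp: deg1_part_def tmono_def)
  have "homog rk1 (length w) (sum_list (map rk1 w)) (tmono w :: 'a list \<Rightarrow> 'k)"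
    by (simp add: homog_def tmono_def)
  then obtain y where y: "homog rk2 (length w) (sum_list (map rk1 w)) y"
    "tsub (phi (tmono w)) y \<in> I2"
    using phi_homog[OF tens_tmono[OF w]] by blast
  have zero2: "deg1_part V2 rk2 i y = (\<lambda>_. 0)"
  proof (rule ext, rule ccontr)
    fix q assume "deg1_part V2 rk2 i y q \<noteq> 0"
    then have "rk2 q = i" "y [q] \<noteq> 0" by (auto simp: deg1_part_def layer_def split: if_splits)
    then have "length w = 1" "sum_list (map rk1 w) = i"
      using y(1) unfolding homog_def by force+
    then obtain u where "w = [u]" "rk1 u = i" by (auto simp: length_Suc_conv)
    then show False using False w by (auto simp: layer_def Vplus_def)
  qed
  show ?thesis
    unfolding deg1_part_cong[OF y(2)] zero1 zero2 phi1_zero[OF i] ..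
qed

lemma deg1_part_phi:
  assumes i: "1 \<le> i" and x: "x \<in> T1"
  shows "deg1_part V2 rk2 i (phi x) = phi1 i (deg1_part V1 rk1 i x)"
  using x
proof (induction rule: tens_induct)
  case zero
  have "deg1_part V1 rk1 i (\<lambda>_. 0 :: 'k) = (\<lambda>_. 0)" by (simp add: deg1_part_def)
  moreover have "deg1_part V2 rk2 i (phi (\<lambda>_. 0)) = (\<lambda>_. 0)"
    using deg1_part_cong[of "phi (\<lambda>_. 0)" "\<lambda>_. 0"] phi_zero by (simp add: tsub_def deg1_part_def)
  ultimately show ?case using phi1_zero[OF i] by simp
next
  case (monomial c w x)
  have m: "tmono w \<in> T1" using tens_tmono[OF monomial.hyps(1)] .
  have "deg1_part V2 rk2 i (phi (tadd (tscale c (tmono w)) x)) =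
      deg1_part V2 rk2 i (tadd (tscale c (phi (tmono w))) (phi x))"
    using deg1_part_cong[OF phi_linear[OF m monomial.hyps(2)]] .
  also have "\<dots> = phi1 i (deg1_part V1 rk1 i (tadd (tscale c (tmono w)) x))"
    using deg1_part_phi_tmono[OF i monomial.hyps(1)] monomial.IH
    by (simp add: deg1_part_linear phi1_linear[OF i deg1_part_vecs deg1_part_vecs])
  finally show ?case .
qed

lemma phi1_surj:
  assumes "1 \<le> i" "g \<in> vecs (layer V2 rk2 i)"
  obtains f where "f \<in> vecs (layer V1 rk1 i)" "phi1 i f = g"
proof -
  obtain x where x: "x \<in> T1" "tsub (phi x) (tvec g) \<in> I2"
    using phi_surj G2.tvec_tens[OF assms] by blast
  have "g = deg1_part V2 rk2 i (phi x)"
    using deg1_part_tvec[OF assms(2)] deg1_part_cong[OF x(2)] by simp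
  also have "\<dots> = phi1 i (deg1_part V1 rk1 i x)" using deg1_part_phi[OF assms(1) x(1)] .
  finally show ?thesis using that deg1_part_vecs by metis
qed

lemma tmult_tvec_RB_transfer:
  assumes "1 \<le> i" "1 \<le> j" "f \<in> vecs (layer V1 rk1 i)" "h \<in> vecs (layer V1 rk1 j)"
  shows "tmult (tvec f) (tvec h) \<in> I1 \<longleftrightarrow> tmult (tvec (phi1 i f)) (tvec (phi1 j h)) \<in> I2"
proof -
  have f: "tvec f \<in> T1" and h: "tvec h \<in> T1" using G1.tvec_tens assms by auto
  have "tmult (tvec f) (tvec h) \<in> I1 \<longleftrightarrow> phi (tmult (tvec f) (tvec h)) \<in> I2"
    using phi_RB_iff tens_tmult[OF f h] by blast
  also have "\<dots> \<longleftrightarrow> tmult (phi (tvec f)) (phi (tvec h)) \<in> I2"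
    using RB_iff_tsub_RB[OF phi_tmult[OF f h]] .
  also have "\<dots> \<longleftrightarrow> tmult (tvec (phi1 i f)) (tvec (phi1 j h)) \<in> I2"
    using RB_iff_tsub_RB[OF RB_tsub_tmult[OF phi1(2)[OF assms(1,3)] phi1(2)[OF assms(2,4)]
          phi_tens[OF h] G2.tvec_tens[OF assms(1) phi1(1)[OF assms(1,3)]]]] .
  finally show ?thesis .
qed

lemma annih_transfer:
  assumes i: "2 \<le> i" and f: "f \<in> vecs (layer V1 rk1 i)" and h: "h \<in> vecs (layer V1 rk1 (i - 1))"
  shows "h \<in> G1.annih i f \<longleftrightarrow> phi1 (i - 1) h \<in> G2.annih i (phi1 i f)"
proof -
  have i1: "1 \<le> i" "1 \<le> i - 1" using i by auto
  have "h \<in> G1.annih i f \<longleftrightarrow> tmult (tvec f) (tvec h) \<in> I1"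
    using G1.tmult_tvec_RB_iff[OF i f h] h by (simp add: G1.annih_def)
  also have "\<dots> \<longleftrightarrow> tmult (tvec (phi1 i f)) (tvec (phi1 (i - 1) h)) \<in> I2"
    by (rule tmult_tvec_RB_transfer[OF i1 f h])
  also have "\<dots> \<longleftrightarrow> phi1 (i - 1) h \<in> G2.annih i (phi1 i f)"
    using G2.tmult_tvec_RB_iff[OF i phi1(1)[OF i1(1) f] phi1(1)[OF i1(2) h]] phi1(1)[OF i1(2) h]
    by (simp add: G2.annih_def)
  finally show ?thesis .
qed

lemma annih_subset_transfer:
  assumes i: "2 \<le> i" and f: "f \<in> vecs (layer V1 rk1 i)" and f': "f' \<in> vecs (layer V1 rk1 i)"
  shows "G1.annih i f \<subseteq> G1.annih i f' \<longleftrightarrow> G2.annih i (phi1 i f) \<subseteq> G2.annih i (phi1 i f')"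
proof
  assume sub: "G1.annih i f \<subseteq> G1.annih i f'"
  show "G2.annih i (phi1 i f) \<subseteq> G2.annih i (phi1 i f')"
  proof
    fix g assume g: "g \<in> G2.annih i (phi1 i f)"
    then have "g \<in> vecs (layer V2 rk2 (i - 1))" by (simp add: G2.annih_def)
    moreover have "1 \<le> i - 1" using i by simp
    ultimately obtain h where h: "h \<in> vecs (layer V1 rk1 (i - 1))" "phi1 (i - 1) h = g"
      using phi1_surj by metis
    then show "g \<in> G2.annih i (phi1 i f')"
      using g sub annih_transfer[OF i f h(1)] annih_transfer[OF i f' h(1)] by blast
  qed
next
  assume sub: "G2.annih i (phi1 i f) \<subseteq> G2.annih i (phi1 i f')"
  show "G1.annih i f \<subseteq> G1.annih i f'"
  proof
    fix h assume h: "h \<in> G1.annih i f"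
    then have "h \<in> vecs (layer V1 rk1 (i - 1))" by (simp add: G1.annih_def)
    then show "h \<in> G1.annih i f'"
      using h sub annih_transfer[OF i f] annih_transfer[OF i f'] by blast
  qed
qed

lemma annih_maximal_transfer:
  assumes i: "2 \<le> i" and f: "f \<in> vecs (layer V1 rk1 i)"
  shows "G1.annih_maximal i f \<longleftrightarrow> G2.annih_maximal i (phi1 i f)"
proof
  have i1: "1 \<le> i" using i by simp
  assume max: "G1.annih_maximal i f"
  show "G2.annih_maximal i (phi1 i f)" unfolding G2.annih_maximal_def
  proof (intro conjI ballI impI)
    show "phi1 i f \<in> vecs (layer V2 rk2 i)" using phi1(1)[OF i1 f] .
    show "phi1 i f \<noteq> (\<lambda>_. 0)"
      using max phi1_eq_zero_iff[OF i1 f] by (simp add: G1.annih_maximal_def)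
    fix g assume g: "g \<in> vecs (layer V2 rk2 i)" "g \<noteq> (\<lambda>_. 0)"
      and sub: "G2.annih i (phi1 i f) \<subseteq> G2.annih i g"
    obtain f' where f': "f' \<in> vecs (layer V1 rk1 i)" "phi1 i f' = g"
      using phi1_surj[OF i1 g(1)] .
    have "f' \<noteq> (\<lambda>_. 0)" using phi1_eq_zero_iff[OF i1 f'(1)] f'(2) g(2) by simp
    moreover have "G1.annih i f \<subseteq> G1.annih i f'"
      using annih_subset_transfer[OF i f f'(1)] sub f'(2) by simp
    ultimately have "G1.annih i f = G1.annih i f'"
      by (rule G1.annih_maximalD[OF max f'(1)])
    then show "G2.annih i (phi1 i f) = G2.annih i g"
      using annih_subset_transfer[OF i f f'(1)] annih_subset_transfer[OF i f'(1) f] f'(2) by auto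
  qed
next
  have i1: "1 \<le> i" using i by simp
  assume max: "G2.annih_maximal i (phi1 i f)"
  show "G1.annih_maximal i f" unfolding G1.annih_maximal_def
  proof (intro conjI ballI impI)
    show "f \<in> vecs (layer V1 rk1 i)" using f .
    show "f \<noteq> (\<lambda>_. 0)"
      using max phi1_eq_zero_iff[OF i1 f] by (simp add: G2.annih_maximal_def)
    fix f' assume f': "f' \<in> vecs (layer V1 rk1 i)" "f' \<noteq> (\<lambda>_. 0)"
      and sub: "G1.annih i f \<subseteq> G1.annih i f'"
    have "phi1 i f' \<noteq> (\<lambda>_. 0)" using phi1_eq_zero_iff[OF i1 f'(1)] f'(2) by simp
    moreover have "G2.annih i (phi1 i f) \<subseteq> G2.annih i (phi1 i f')"
      using annih_subset_transfer[OF i f f'(1)] sub by simp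
    ultimately have "G2.annih i (phi1 i f) = G2.annih i (phi1 i f')"
      by (rule G2.annih_maximalD[OF max phi1(1)[OF i1 f'(1)]])
    then show "G1.annih i f = G1.annih i f'"
      using annih_subset_transfer[OF i f f'(1)] annih_subset_transfer[OF i f'(1) f] by auto
  qed
qed

lemma phi1_delta:
  assumes good: "G1.good_layer i" and i: "2 \<le> i" and u: "u \<in> layer V1 rk1 i"
  shows "\<exists>q\<in>layer V2 rk2 i. \<exists>c. c \<noteq> 0 \<and> phi1 i (delta u) = (\<lambda>v. c * delta q v)"
proof -
  have i1: "1 \<le> i" using i by simp
  have du: "(delta u :: 'a \<Rightarrow> 'k) \<in> vecs (layer V1 rk1 i)" using delta_in_vecs[OF u] .
  have max: "G2.annih_maximal i (phi1 i (delta u))"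
    using annih_maximal_transfer[OF i du] G1.annih_maximal_delta[OF good u, where 'k = 'k] by simp
  then obtain q where q: "phi1 i (delta u) q \<noteq> 0"
    by (auto simp: G2.annih_maximal_def fun_eq_iff)
  then have qi: "q \<in> layer V2 rk2 i" using phi1(1)[OF i1 du] by (simp add: vecs_def)
  obtain f where f: "f \<in> vecs (layer V1 rk1 i)" "phi1 i f = delta q"
    using phi1_surj[OF i1 delta_in_vecs[OF qi]] .
  have "G1.annih_maximal i f"
    using annih_maximal_transfer[OF i f(1)] G2.annih_maximal_delta_of_support(1)[OF max q] f(2)
    by simp
  then obtain u' where u': "u' \<in> layer V1 rk1 i" "\<And>v. f v \<noteq> 0 \<longleftrightarrow> v = u'"
    using G1.annih_maximal_imp_single_support[OF good] by blast
  have "G2.annih i (phi1 i f) = G2.annih i (phi1 i (delta u))"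
    using G2.annih_maximal_delta_of_support(2)[OF max q] f(2) by simp
  then have "G1.annih i f = G1.annih i (delta u)"
    using annih_subset_transfer[OF i f(1) du] annih_subset_transfer[OF i du f(1)] by blast
  moreover have "G1.annih i f = G1.annih i (delta u')"
    using u'(2) by (intro G1.annih_cong_support) (auto simp: delta_def)
  ultimately have "u' = u"
    using G1.good_layer_annih_delta_inj[OF good u'(1) u, where 'k = 'k] by simp
  then have "f = (\<lambda>v. f u * delta u v)"
    using u'(2) by (force simp: delta_def)
  then have "delta q = (\<lambda>v. f u * phi1 i (delta u) v)"
    using f(2) phi1_scale[OF i1 du] by metis
  moreover have fu: "f u \<noteq> 0" using u'(2) \<open>u' = u\<close> by simp
  ultimately have "phi1 i (delta u) = (\<lambda>v. inverse (f u) * delta q v)"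
    by (simp add: field_simps)
  with qi fu show ?thesis by (intro bexI[OF _ qi] exI[of _ "inverse (f u)"]) simp
qed

definition layer_map :: "nat \<Rightarrow> 'a \<Rightarrow> 'b" where
  "layer_map i u =
     (SOME q. q \<in> layer V2 rk2 i \<and> (\<exists>c. c \<noteq> 0 \<and> phi1 i (delta u) = (\<lambda>v. c * delta q v)))"

lemma layer_map:
  assumes "G1.good_layer i" "2 \<le> i" "u \<in> layer V1 rk1 i"
  shows "layer_map i u \<in> layer V2 rk2 i"
    and "\<exists>c. c \<noteq> 0 \<and> phi1 i (delta u) = (\<lambda>v. c * delta (layer_map i u) v)"
  using someI_ex[OF phi1_delta[OF assms, unfolded Bex_def]] unfolding layer_map_def by blast+

lemma annih_phi1_delta:
  assumes "G1.good_layer i" "2 \<le> i" "u \<in> layer V1 rk1 i"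
  shows "G2.annih i (phi1 i (delta u)) = G2.annih i (delta (layer_map i u))"
proof -
  obtain c where c: "c \<noteq> 0" "phi1 i (delta u) = (\<lambda>v. c * delta (layer_map i u) v)"
    using layer_map(2)[OF assms] by blast
  show ?thesis unfolding c(2) by (rule G2.annih_cong_support) (use c(1) in auto)
qed

lemma layer_map_inj:
  assumes good: "G1.good_layer i" and i: "2 \<le> i"
    and u: "u \<in> layer V1 rk1 i" and u': "u' \<in> layer V1 rk1 i"
    and eq: "layer_map i u = layer_map i u'"
  shows "u = u'"
proof -
  have "G2.annih i (phi1 i (delta u)) = G2.annih i (phi1 i (delta u'))"
    using annih_phi1_delta[OF good i u] annih_phi1_delta[OF good i u'] eq by simp
  then have "G1.annih i (delta u :: 'a \<Rightarrow> 'k) \<subseteq> G1.annih i (delta u')"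
    using annih_subset_transfer[OF i delta_in_vecs[OF u] delta_in_vecs[OF u']] by simp
  then show ?thesis by (rule G1.good_layer_annih_delta_inj[OF good u u'])
qed

lemma layer_map_surj:
  assumes good: "G1.good_layer i" and i: "2 \<le> i" and q: "q \<in> layer V2 rk2 i"
  shows "\<exists>u\<in>layer V1 rk1 i. layer_map i u = q"
proof (rule ccontr)
  assume not_hit: "\<not> (\<exists>u\<in>layer V1 rk1 i. layer_map i u = q)"
  have i1: "1 \<le> i" using i by simp
  have "phi1 i f q = 0" if "f \<in> vecs (layer V1 rk1 i)" for f
    using G1.finite_layer that
  proof (induction f rule: vecs_induct)
    case zero
    then show ?case by (simp add: phi1_zero[OF i1])
  next
    case (delta c u f)
    obtain c' where "phi1 i (delta u) = (\<lambda>v. c' * delta (layer_map i u) v)"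
      using layer_map(2)[OF good i delta.hyps(1)] by blast
    then have "phi1 i (delta u) q = 0"
      using not_hit delta.hyps(1) by (auto simp: delta_def)
    then show ?case
      using phi1_linear[OF i1 delta_in_vecs[OF delta.hyps(1)] delta.hyps(2)] delta.IH by simp
  qed
  moreover obtain f where "f \<in> vecs (layer V1 rk1 i)" "phi1 i f = delta q"
    using phi1_surj[OF i1 delta_in_vecs[OF q]] .
  ultimately show False by (metis delta_def zero_neq_one)
qed

lemma card_nb_layer_map:
  assumes good: "G1.good_layer i" and i: "2 \<le> i" and u: "u \<in> layer V1 rk1 i"
  shows "2 \<le> card (nb E2 (layer_map i u))"
proof (rule ccontr)
  assume "\<not> 2 \<le> card (nb E2 (layer_map i u))"
  then have const: "const_on h (nb E2 (layer_map i u))" for h :: "'b \<Rightarrow> 'k"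
    by (intro const_on_card_le_1 G2.finite_nb) simp
  have card_u: "2 \<le> card (nb E1 u)" using good u by (simp add: G1.good_layer_def)
  then obtain w where w: "w \<in> nb E1 u" by fastforce
  have wl: "w \<in> layer V1 rk1 (i - 1)" using w G1.nb_subset_layer[OF u] by blast
  have i1: "1 \<le> i - 1" using i by simp
  have "phi1 (i - 1) (delta w) \<in> G2.annih i (phi1 i (delta u))"
    unfolding annih_phi1_delta[OF good i u] G2.annih_delta
    using const phi1(1)[OF i1 delta_in_vecs[OF wl]] by simp
  then have "(delta w :: 'a \<Rightarrow> 'k) \<in> G1.annih i (delta u)"
    using annih_transfer[OF i delta_in_vecs[OF u] delta_in_vecs[OF wl]] by simp
  then show False using G1.delta_in_annih_delta_iff[OF card_u wl, where 'k = 'k] w by simp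
qed

lemma layer_map_edge_iff:
  assumes good: "G1.good_layer i" "G1.good_layer (i - 1)" and i: "3 \<le> i"
    and u: "u \<in> layer V1 rk1 i" and v: "v \<in> layer V1 rk1 (i - 1)"
  shows "(u, v) \<in> E1 \<longleftrightarrow> (layer_map i u, layer_map (i - 1) v) \<in> E2"
proof -
  have i2: "2 \<le> i" "2 \<le> i - 1" using i by auto
  obtain c where c: "c \<noteq> 0" "phi1 (i - 1) (delta v) = (\<lambda>x. c * delta (layer_map (i - 1) v) x)"
    using layer_map(2)[OF good(2) i2(2) v] by blast
  have q: "layer_map (i - 1) v \<in> layer V2 rk2 (i - 1)" using layer_map(1)[OF good(2) i2(2) v] .
  have card_u: "2 \<le> card (nb E1 u)" using good(1) u by (simp add: G1.good_layer_def)
  have "(u, v) \<notin> E1 \<longleftrightarrow> (delta v :: 'a \<Rightarrow> 'k) \<in> G1.annih i (delta u)"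
    using G1.delta_in_annih_delta_iff[OF card_u v, where 'k = 'k] by (simp add: nb_def)
  also have "\<dots> \<longleftrightarrow> phi1 (i - 1) (delta v) \<in> G2.annih i (delta (layer_map i u))"
    using annih_transfer[OF i2(1) delta_in_vecs[OF u] delta_in_vecs[OF v]]
      annih_phi1_delta[OF good(1) i2(1) u] by simp
  also have "\<dots> \<longleftrightarrow> const_on (delta (layer_map (i - 1) v) :: 'b \<Rightarrow> 'k) (nb E2 (layer_map i u))"
    using delta_vecs[OF q, of c] c by (simp add: G2.annih_delta const_on_def)
  also have "\<dots> \<longleftrightarrow> (layer_map i u, layer_map (i - 1) v) \<notin> E2"
    using const_on_delta_iff[OF card_nb_layer_map[OF good(1) i2(1) u]] by (simp add: nb_def)
  finally show ?thesis by simp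
qed

definition graph_map :: "'a \<Rightarrow> 'b" where
  "graph_map u = layer_map (rk1 u) u"

lemma graph_map_layer:
  assumes good: "\<And>i. 2 \<le> i \<Longrightarrow> G1.good_layer i" and u: "u \<in> V1" "2 \<le> rk1 u"
  shows "graph_map u \<in> V2" "rk2 (graph_map u) = rk1 u"
proof -
  have "u \<in> layer V1 rk1 (rk1 u)" using u(1) by (simp add: layer_def)
  then have "graph_map u \<in> layer V2 rk2 (rk1 u)"
    unfolding graph_map_def using layer_map(1)[OF good[OF u(2)] u(2)] by blast
  then show "graph_map u \<in> V2" "rk2 (graph_map u) = rk1 u" by (simp_all add: layer_def)
qed

lemma bij_betw_graph_map:
  assumes good: "\<And>i. 2 \<le> i \<Longrightarrow> G1.good_layer i"
  shows "bij_betw graph_map {u\<in>V1. 2 \<le> rk1 u} {q\<in>V2. 2 \<le> rk2 q}"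
  unfolding bij_betw_def
proof
  show "inj_on graph_map {u\<in>V1. 2 \<le> rk1 u}"
  proof (rule inj_onI)
    fix u u' assume u: "u \<in> {u\<in>V1. 2 \<le> rk1 u}" and u': "u' \<in> {u\<in>V1. 2 \<le> rk1 u}"
      and eq: "graph_map u = graph_map u'"
    have "rk2 (graph_map u) = rk1 u" "rk2 (graph_map u') = rk1 u'"
      using graph_map_layer(2)[OF good] u u' by simp_all
    with eq have r: "rk1 u' = rk1 u" by simp
    have "u \<in> layer V1 rk1 (rk1 u)" "u' \<in> layer V1 rk1 (rk1 u)"
      using u u' r by (simp_all add: layer_def)
    moreover have "layer_map (rk1 u) u = layer_map (rk1 u) u'"
      using eq r by (simp add: graph_map_def)
    moreover have "2 \<le> rk1 u" using u by simp
    ultimately show "u = u'" using layer_map_inj good by blast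
  qed
  show "graph_map ` {u\<in>V1. 2 \<le> rk1 u} = {q\<in>V2. 2 \<le> rk2 q}"
  proof
    show "graph_map ` {u\<in>V1. 2 \<le> rk1 u} \<subseteq> {q\<in>V2. 2 \<le> rk2 q}"
      using graph_map_layer[OF good] by auto
    show "{q\<in>V2. 2 \<le> rk2 q} \<subseteq> graph_map ` {u\<in>V1. 2 \<le> rk1 u}"
    proof
      fix q assume q: "q \<in> {q\<in>V2. 2 \<le> rk2 q}"
      then have "2 \<le> rk2 q" "q \<in> layer V2 rk2 (rk2 q)" by (simp_all add: layer_def)
      then obtain u where "u \<in> layer V1 rk1 (rk2 q)" "layer_map (rk2 q) u = q"
        using layer_map_surj good by blast
      then show "q \<in> graph_map ` {u\<in>V1. 2 \<le> rk1 u}"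
        using q by (intro image_eqI[of _ _ u]) (auto simp: layer_def graph_map_def)
    qed
  qed
qed

lemma graph_map_edge_iff:
  assumes good: "\<And>i. 2 \<le> i \<Longrightarrow> G1.good_layer i"
    and u: "u \<in> V1" "2 \<le> rk1 u" and v: "v \<in> V1" "2 \<le> rk1 v"
  shows "(u, v) \<in> E1 \<longleftrightarrow> (graph_map u, graph_map v) \<in> E2"
proof (cases "rk1 u = Suc (rk1 v)")
  case True
  then show ?thesis
    using layer_map_edge_iff[OF good good, of "rk1 u" u v] u v by (simp add: graph_map_def layer_def)
next
  case False
  have "(graph_map u, graph_map v) \<notin> E2"
  proof
    assume "(graph_map u, graph_map v) \<in> E2"
    then have "rk2 (graph_map u) = Suc (rk2 (graph_map v))" by (rule G2.rank_edge)
    with False show False using graph_map_layer(2)[OF good] u v by simp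
  qed
  with False show ?thesis using G1.rank_edge by blast
qed

end

section \<open>From Hasse diagrams to ranked posets\<close>

lemma rtranclp_bij_betw_iff:
  assumes bij: "bij_betw f A B"
    and R: "\<And>a b. R a b \<Longrightarrow> a \<in> A \<and> b \<in> A" and S: "\<And>a b. S a b \<Longrightarrow> a \<in> B \<and> b \<in> B"
    and RS: "\<And>a b. a \<in> A \<Longrightarrow> b \<in> A \<Longrightarrow> R a b \<longleftrightarrow> S (f a) (f b)"
    and x: "x \<in> A" and y: "y \<in> A"
  shows "R\<^sup>*\<^sup>* x y \<longleftrightarrow> S\<^sup>*\<^sup>* (f x) (f y)"
proof
  assume "R\<^sup>*\<^sup>* x y"
  then show "S\<^sup>*\<^sup>* (f x) (f y)"
  proof (induction rule: rtranclp_induct)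
    case (step y z)
    then have "S (f y) (f z)" using R RS by blast
    with step.IH show ?case by (rule rtranclp.rtrancl_into_rtrancl)
  qed simp
next
  have "S\<^sup>*\<^sup>* (f x) z \<Longrightarrow> \<exists>y\<in>A. z = f y \<and> R\<^sup>*\<^sup>* x y" for z
  proof (induction rule: rtranclp_induct)
    case base
    then show ?case using x by blast
  next
    case (step z z')
    then obtain y where y: "y \<in> A" "z = f y" "R\<^sup>*\<^sup>* x y" by blast
    obtain y' where y': "y' \<in> A" "z' = f y'"
      using S[OF step.hyps(2)] bij by (auto simp: bij_betw_def)
    then have "R y y'" using RS y step.hyps(2) by simp
    with y(3) have "R\<^sup>*\<^sup>* x y'" by (rule rtranclp.rtrancl_into_rtrancl)
    with y' show ?case by blast
  qed
  moreover assume "S\<^sup>*\<^sup>* (f x) (f y)"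
  ultimately show "R\<^sup>*\<^sup>* x y"
    using y bij by (metis bij_betw_def inj_onD)
qed

lemma rtranclp_covers_if_le:
  assumes po: "is_poset P le" and fin: "finite P"
  shows "x \<in> P \<Longrightarrow> y \<in> P \<Longrightarrow> le x y \<Longrightarrow> (\<lambda>a b. covers P le b a)\<^sup>*\<^sup>* x y"
proof (induction "card {r\<in>P. le x r \<and> le r y}" arbitrary: x y rule: less_induct)
  case less
  have refl: "\<And>x. x \<in> P \<Longrightarrow> le x x"
    and antisym: "\<And>x y. x \<in> P \<Longrightarrow> y \<in> P \<Longrightarrow> le x y \<Longrightarrow> le y x \<Longrightarrow> x = y"
    and trans: "\<And>x y z. x \<in> P \<Longrightarrow> y \<in> P \<Longrightarrow> z \<in> P \<Longrightarrow> le x y \<Longrightarrow> le y z \<Longrightarrow> le x z"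
    using po unfolding is_poset_def by blast+
  show ?case
  proof (cases "\<exists>r\<in>P. le x r \<and> le r y \<and> r \<noteq> x \<and> r \<noteq> y")
    case False
    then show ?thesis
      using less.prems by (cases "x = y") (auto simp: covers_def)
  next
    case True
    then obtain r where r: "r \<in> P" "le x r" "le r y" "r \<noteq> x" "r \<noteq> y" by blast
    have finI: "finite {r\<in>P. le x r \<and> le r y}" using fin by simp
    have "{s\<in>P. le x s \<and> le s r} \<subset> {s\<in>P. le x s \<and> le s y}"
      using r less.prems refl trans antisym[of y r] by blast
    then have "(\<lambda>a b. covers P le b a)\<^sup>*\<^sup>* x r"
      using less.hyps[OF psubset_card_mono[OF finI]] less.prems r by blast
    moreover have "{s\<in>P. le r s \<and> le s y} \<subset> {s\<in>P. le x s \<and> le s y}"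
      using r less.prems refl trans antisym[of x r] by blast
    then have "(\<lambda>a b. covers P le b a)\<^sup>*\<^sup>* r y"
      using less.hyps[OF psubset_card_mono[OF finI]] less.prems r by blast
    ultimately show ?thesis by simp
  qed
qed

lemma le_iff_rtranclp_covers:
  assumes po: "is_poset P le" and fin: "finite P" and x: "x \<in> P" and y: "y \<in> P"
  shows "le x y \<longleftrightarrow> (\<lambda>a b. covers P le b a)\<^sup>*\<^sup>* x y"
proof
  assume "(\<lambda>a b. covers P le b a)\<^sup>*\<^sup>* x y"
  then have "le x y \<and> y \<in> P"
  proof (induction rule: rtranclp_induct)
    case base
    then show ?case using po x by (simp add: is_poset_def)
  next
    case (step b c)
    then show ?case using po x unfolding covers_def is_poset_def by blast
  qed
  then show "le x y" ..
qed (rule rtranclp_covers_if_le[OF po fin x y])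

definition covers_above :: "'a set \<Rightarrow> ('a \<Rightarrow> 'a \<Rightarrow> bool) \<Rightarrow> ('a \<Rightarrow> nat) \<Rightarrow> nat \<Rightarrow> 'a \<Rightarrow> 'a \<Rightarrow> bool"
  where "covers_above P le rk k a b \<longleftrightarrow> covers P le b a \<and> k \<le> rk a"

lemma rank_function_covers: "rank_function P le rk \<Longrightarrow> covers P le p q \<Longrightarrow> rk p = Suc (rk q)"
  by (simp add: rank_function_def)

lemma covers_above_closed:
  "rank_function P le rk \<Longrightarrow> covers_above P le rk k a b \<Longrightarrow>
   a \<in> {p\<in>P. k \<le> rk p} \<and> b \<in> {p\<in>P. k \<le> rk p}"
  using rank_function_covers by (fastforce simp: covers_above_def covers_def)

lemma le_iff_rtranclp_covers_above:
  assumes po: "is_poset P le" and fin: "finite P" and rk: "rank_function P le rk"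
    and x: "x \<in> P" "k \<le> rk x" and y: "y \<in> P"
  shows "le x y \<longleftrightarrow> (covers_above P le rk k)\<^sup>*\<^sup>* x y"
proof -
  have "(covers_above P le rk k)\<^sup>*\<^sup>* x z" if "(\<lambda>a b. covers P le b a)\<^sup>*\<^sup>* x z" for z
    using that
  proof (induction rule: rtranclp_induct)
    case (step b c)
    moreover have "(\<lambda>a b. covers P le b a)\<^sup>*\<^sup>* x b \<Longrightarrow> rk x \<le> rk b"
      by (induction rule: rtranclp_induct) (auto dest: rank_function_covers[OF rk])
    ultimately show ?case
      using x(2) by (auto simp: covers_above_def intro: rtranclp.rtrancl_into_rtrancl)
  qed simp
  moreover have "(\<lambda>a b. covers P le b a)\<^sup>*\<^sup>* x z" if "(covers_above P le rk k)\<^sup>*\<^sup>* x z" for z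
    using that by (rule rtranclp_mono[THEN predicate2D, rotated]) (auto simp: covers_above_def)
  ultimately show ?thesis using le_iff_rtranclp_covers[OF po fin x(1) y] by blast
qed

lemma order_iso_if_cover_iso:
  assumes P: "finite P" "is_poset P leP" "rank_function P leP rkP"
    and Q: "finite Q" "is_poset Q leQ" "rank_function Q leQ rkQ"
    and bij: "bij_betw f {p\<in>P. k \<le> rkP p} {q\<in>Q. k \<le> rkQ q}"
    and covers: "\<And>a b. a \<in> {p\<in>P. k \<le> rkP p} \<Longrightarrow> b \<in> {p\<in>P. k \<le> rkP p} \<Longrightarrow>
                   covers P leP b a \<longleftrightarrow> covers Q leQ (f b) (f a)"
    and x: "x \<in> {p\<in>P. k \<le> rkP p}" and y: "y \<in> {p\<in>P. k \<le> rkP p}"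
  shows "leP x y \<longleftrightarrow> leQ (f x) (f y)"
proof -
  have fx: "f x \<in> {q\<in>Q. k \<le> rkQ q}" and fy: "f y \<in> {q\<in>Q. k \<le> rkQ q}"
    using bij x y by (auto simp: bij_betw_def)
  have "leP x y \<longleftrightarrow> (covers_above P leP rkP k)\<^sup>*\<^sup>* x y"
    using le_iff_rtranclp_covers_above[OF P(2,1,3)] x y by simp
  also have "\<dots> \<longleftrightarrow> (covers_above Q leQ rkQ k)\<^sup>*\<^sup>* (f x) (f y)"
  proof (rule rtranclp_bij_betw_iff[OF bij covers_above_closed[OF P(3)] covers_above_closed[OF Q(3)] _ x y])
    fix a b assume "a \<in> {p\<in>P. k \<le> rkP p}" "b \<in> {p\<in>P. k \<le> rkP p}"
    then show "covers_above P leP rkP k a b \<longleftrightarrow> covers_above Q leQ rkQ k (f a) (f b)"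
      using covers bij by (auto simp: covers_above_def bij_betw_def)
  qed
  also have "\<dots> \<longleftrightarrow> leQ (f x) (f y)"
    using le_iff_rtranclp_covers_above[OF Q(2,1,3)] fx fy by blast
  finally show ?thesis .
qed

lemma layered_graph_hasse_edges:
  "finite P \<Longrightarrow> rank_function P le rk \<Longrightarrow> layered_graph P rk (hasse_edges P le)"
  by unfold_locales (auto simp: hasse_edges_def covers_def rank_function_def)

lemma nb_hasse_edges: "nb (hasse_edges P le) u = S_cov P le u"
  by (simp add: nb_def hasse_edges_def S_cov_def)

lemma good_layer_hasse_edges:
  assumes lg: "layered_graph P rk (hasse_edges P le)"
    and nn: "non_nesting P le" and card: "\<forall>p\<in>P. rk p > 1 \<longrightarrow> card (S_cov P le p) > 1"
    and i: "2 \<le> i"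
  shows "layered_graph.good_layer P rk (hasse_edges P le) i"
  unfolding layered_graph.good_layer_def[OF lg] nb_hasse_edges
proof (intro conjI ballI impI)
  fix u assume "u \<in> layer P rk i"
  then have "u \<in> P" "rk u > 1" using i by (auto simp: layer_def)
  then show "2 \<le> card (S_cov P le u)" using card by fastforce
next
  fix u u' assume u: "u \<in> layer P rk i" and u': "u' \<in> layer P rk i" and "u \<noteq> u'"
  moreover have "card (S_cov P le u) > 1" "card (S_cov P le u') > 1"
    using u u' i card by (auto simp: layer_def)
  ultimately show "\<not> S_cov P le u \<subseteq> S_cov P le u'"
    using nn by (auto simp: non_nesting_def layer_def)
qed

theorem mainTheorem15:
  fixes P :: "'a set" and leP :: "'a \<Rightarrow> 'a \<Rightarrow> bool" and rkP :: "'a \<Rightarrow> nat"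
    and Q :: "'b set" and leQ :: "'b \<Rightarrow> 'b \<Rightarrow> bool" and rkQ :: "'b \<Rightarrow> nat"
  assumes P: "fin_ranked_poset_umin P leP rkP"
    and nn: "non_nesting P leP"
    and Scard: "\<forall>p\<in>P. rkP p > 1 \<longrightarrow> card (S_cov P leP p) > 1"
    and Q: "fin_ranked_poset_umin Q leQ rkQ"
    and QP: "B_equiv TYPE('k::field) Q leQ rkQ P leP rkP"
  shows "\<exists>f. bij_betw f {p\<in>P. rkP p \<ge> 2} {q\<in>Q. rkQ q \<ge> 2} \<and>
             (\<forall>x\<in>{p\<in>P. rkP p \<ge> 2}. \<forall>y\<in>{p\<in>P. rkP p \<ge> 2}. leP x y \<longleftrightarrow> leQ (f x) (f y)) \<and>
             (\<forall>x\<in>{p\<in>P. rkP p \<ge> 2}. rkQ (f x) = rkP x)"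
proof -
  obtain phi :: "('a list \<Rightarrow> 'k) \<Rightarrow> ('b list \<Rightarrow> 'k)"
    where phi: "graded_B_iso P rkP (hasse_edges P leP) Q rkQ (hasse_edges Q leQ) phi"
    using QP unfolding B_equiv_def by blast
  have P': "finite P" "is_poset P leP" "rank_function P leP rkP"
    and Q': "finite Q" "is_poset Q leQ" "rank_function Q leQ rkQ"
    using P Q by (simp_all add: fin_ranked_poset_umin_def)
  interpret B_iso P rkP "hasse_edges P leP" Q rkQ "hasse_edges Q leQ" phi
    using layered_graph_hasse_edges[OF P'(1,3)] layered_graph_hasse_edges[OF Q'(1,3)] phi
    by (simp add: B_iso_def B_iso_axioms_def)
  have good: "G1.good_layer i" if "2 \<le> i" for i
    using good_layer_hasse_edges[OF G1.layered_graph_axioms nn Scard that] .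
  have "covers P leP b a \<longleftrightarrow> covers Q leQ (graph_map b) (graph_map a)"
    if "a \<in> {p\<in>P. 2 \<le> rkP p}" "b \<in> {p\<in>P. 2 \<le> rkP p}" for a b
    using graph_map_edge_iff[OF good] that by (simp add: hasse_edges_def)
  then have "leP x y \<longleftrightarrow> leQ (graph_map x) (graph_map y)"
    if "x \<in> {p\<in>P. 2 \<le> rkP p}" "y \<in> {p\<in>P. 2 \<le> rkP p}" for x y
    using order_iso_if_cover_iso[OF P' Q' bij_betw_graph_map[OF good]] that by blast
  moreover have "rkQ (graph_map x) = rkP x" if "x \<in> {p\<in>P. 2 \<le> rkP p}" for x
    using graph_map_layer(2)[OF good] that by blast
  ultimately show ?thesis using bij_betw_graph_map[OF good] by blast
qed

end
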